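(* Let $p$ be a prime, $\mathbb{F}_p$ the field with $p$ elements, $n\ge 2$ and $1\le m\le n-1$ integers. For any real $\alpha$ with $\min\{m,n-m\}<\alpha\le m(n-m)$, there exists a subset $G\subset G(n,n-m)$ with $|G|\approx p^{\alpha}$ such that for every set $E\subset\mathbb{F}_p^n$ and every $N>0$, \[ |\{W\in G:\ |\pi^{W}(E)|\le N\}|\lesssim |G|\,N\,(|E|^{-1}+p^{-m}). \]
   Context: $G(n,k)$ denotes the set of all $k$-dimensional linear subspaces of $\mathbb{F}_p^n$. For a nontrivial subspace $W$ and $E\subset\mathbb{F}_p^n$, $\pi^{W}(E)=\{x+W:\ E\cap(x+W)\neq\emptyset,\ x\in\mathbb{F}_p^n\}$ is the set of cosets of $W$ meeting $E$, and $|\pi^W(E)|$ its cardinality. $|J|$ denotes cardinality. $f\lesssim g$ means $f\le Cg$ for a constant $C$ independent of $p$, $E$, $N$ (depending only on $n,m,\alpha$); $f\approx g$ means $f\lesssim g$ and $g\lesssim f$. *)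

theory Defs
  imports Complex_Main "HOL-Computational_Algebra.Primes"
begin

text \<open>The vector space F_p^n, realised concretely: vectors are functions nat => nat with
  coordinates i < n taking values in {0..<p} (representatives of F_p) and all coordinates
  i >= n equal to 0. Arithmetic is performed modulo p.\<close>

definition Fpn :: "nat \<Rightarrow> nat \<Rightarrow> (nat \<Rightarrow> nat) set" where
  "Fpn p n = {x. (\<forall>i<n. x i < p) \<and> (\<forall>i\<ge>n. x i = 0)}"

definition vadd :: "nat \<Rightarrow> (nat \<Rightarrow> nat) \<Rightarrow> (nat \<Rightarrow> nat) \<Rightarrow> (nat \<Rightarrow> nat)" where
  "vadd p x y = (\<lambda>i. (x i + y i) mod p)"

definition lincomb :: "nat \<Rightarrow> nat list \<Rightarrow> (nat \<Rightarrow> nat) list \<Rightarrow> (nat \<Rightarrow> nat)" where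
  "lincomb p cs vs = (\<lambda>i. (\<Sum>j<length vs. cs ! j * (vs ! j) i) mod p)"

definition fspan :: "nat \<Rightarrow> (nat \<Rightarrow> nat) list \<Rightarrow> (nat \<Rightarrow> nat) set" where
  "fspan p vs = {lincomb p cs vs | cs. length cs = length vs \<and> (\<forall>c\<in>set cs. c < p)}"

definition lin_indep :: "nat \<Rightarrow> (nat \<Rightarrow> nat) list \<Rightarrow> bool" where
  "lin_indep p vs \<longleftrightarrow>
     (\<forall>cs. length cs = length vs \<and> (\<forall>c\<in>set cs. c < p) \<and> lincomb p cs vs = (\<lambda>_. 0)
           \<longrightarrow> (\<forall>c\<in>set cs. c = 0))"

definition Grass :: "nat \<Rightarrow> nat \<Rightarrow> nat \<Rightarrow> (nat \<Rightarrow> nat) set set" where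
  "Grass p n k = {fspan p vs | vs. length vs = k \<and> set vs \<subseteq> Fpn p n \<and> lin_indep p vs}"

definition coset :: "nat \<Rightarrow> (nat \<Rightarrow> nat) \<Rightarrow> (nat \<Rightarrow> nat) set \<Rightarrow> (nat \<Rightarrow> nat) set" where
  "coset p x W = vadd p x ` W"

definition proj :: "nat \<Rightarrow> nat \<Rightarrow> (nat \<Rightarrow> nat) set \<Rightarrow> (nat \<Rightarrow> nat) set \<Rightarrow> (nat \<Rightarrow> nat) set set" where
  "proj p n W E = {coset p x W | x. x \<in> Fpn p n \<and> E \<inter> coset p x W \<noteq> {}}"

end

(*
  Let k = n - m and, for an m x k matrix M over F_p, let W_M = {(x, Mx)} in G(n, k). The coset of
  W_M containing u is determined by the label u_fibre - M u_base, so by Cauchy-Schwarz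
  |E|^2 <= |pi^(W_M)(E)| * En_M(E), where En_M(E) counts the pairs of E with equal labels. It
  therefore suffices to find about p^alpha matrices whose average energy is at most a constant
  times |E| + |E|^2 / p^m.

  The matrices are built from a set R of size about p^beta that meets every affine hyperplane
  in at most a constant times |R| / p points; such R exist for all 1 < beta <= dim, namely a
  coordinate subspace times a thickened moment curve, because a nonzero polynomial of degree d
  has at most d roots modulo p. If m <= k, the rows of M are drawn from R in F_p^k (beta = alpha/m):
  two points with different bases then have equal labels for at most a p^(-m) fraction of the
  matrices. If m > k, the columns are drawn from R in F_p^m (beta = alpha/k) and one counts
  dually: u and v have equal labels iff u - v is orthogonal to all vectors (-M^T eta, eta),
  and averaging over eta turns the energy into line energies of E, whose total over all
  directions is known exactly.
*)
theory Submission
  imports Defs "HOL-Computational_Algebra.Polynomial" "HOL-Analysis.Convex" "HOL-Number_Theory.Cong"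
begin

lemma Fpn_less: "x \<in> Fpn p n \<Longrightarrow> i < n \<Longrightarrow> x i < p"
  and Fpn_zero_beyond: "x \<in> Fpn p n \<Longrightarrow> n \<le> i \<Longrightarrow> x i = 0"
  by (simp_all add: Fpn_def)

lemma zero_in_Fpn: "p > 0 \<Longrightarrow> (\<lambda>_. 0) \<in> Fpn p n"
  by (simp add: Fpn_def)

lemma Fpn_Suc_eq_image: "Fpn p (Suc k) = (\<lambda>(x, a). x(k := a)) ` (Fpn p k \<times> {..<p})"
proof (rule set_eqI, rule iffI)
  fix y assume y: "y \<in> Fpn p (Suc k)"
  then have "y(k := 0) \<in> Fpn p k" "y k < p" by (auto simp: Fpn_def)
  then show "y \<in> (\<lambda>(x, a). x(k := a)) ` (Fpn p k \<times> {..<p})"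
    by (intro image_eqI[where x = "(y(k := 0), y k)"]) auto
qed (auto simp: Fpn_def less_Suc_eq)

lemma inj_on_fun_upd_Fpn: "inj_on (\<lambda>(x, a). x(k := a)) (Fpn p k \<times> A)"
proof (rule inj_onI, clarify)
  fix x a y b assume "x \<in> Fpn p k" "y \<in> Fpn p k" and eq: "x(k := a) = y(k := b)"
  then have "x k = y k" by (simp add: Fpn_def)
  have "x l = y l" for l
    using fun_cong[OF eq, of l] \<open>x k = y k\<close> by (cases "l = k") auto
  then show "x = y \<and> a = b" using fun_cong[OF eq, of k] by auto
qed

lemma finite_card_Fpn: "finite (Fpn p k) \<and> card (Fpn p k) = p ^ k"
proof (induction k)
  case 0
  have "Fpn p 0 = {\<lambda>_. 0}" by (auto simp: Fpn_def)
  then show ?case by simp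
next
  case (Suc k)
  then show ?case
    using inj_on_fun_upd_Fpn[of k p "{..<p}"]
    by (simp add: Fpn_Suc_eq_image card_image card_cartesian_product)
qed

lemma finite_Fpn [simp]: "finite (Fpn p k)"
  and card_Fpn [simp]: "card (Fpn p k) = p ^ k"
  using finite_card_Fpn by blast+

lemma finite_subset_Fpn: "E \<subseteq> Fpn p n \<Longrightarrow> finite E"
  using finite_subset finite_Fpn by blast

lemma int_dvd_diff_iff_eq:
  assumes "a < p" "b < p"
  shows "int p dvd int a - int b \<longleftrightarrow> a = b"
proof -
  have "int p dvd int a - int b \<longleftrightarrow> int a mod int p = int b mod int p"
    by (simp add: mod_eq_dvd_iff)
  then show ?thesis using assms by simp
qed

lemma Fpn_eqI:
  assumes u: "u \<in> Fpn p n" and v: "v \<in> Fpn p n"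
    and dvd: "\<And>l. l < n \<Longrightarrow> int p dvd int (u l) - int (v l)"
  shows "u = v"
proof
  fix l show "u l = v l"
  proof (cases "l < n")
    case True
    have "u l < p" "v l < p" using Fpn_less u v True by blast+
    then show ?thesis using dvd[OF True] int_dvd_diff_iff_eq by blast
  next
    case False
    then show ?thesis using Fpn_zero_beyond u v by (metis not_less)
  qed
qed

lemma linear_congruence_solve:
  assumes p: "prime p" and z: "\<not> int p dvd z"
  shows "\<exists>w. \<forall>a d c. a < p \<longrightarrow>
    ((z * int a + d) mod int p = c mod int p \<longleftrightarrow> int a = ((c - d) * w) mod int p)"
proof -
  have "prime (int p)" using p by simp
  then have "coprime z (int p)"
    using prime_imp_coprime z by (blast intro: coprime_commute[THEN iffD1])
  then obtain w where w: "[z * w = 1] (mod int p)" using cong_solve_coprime_int by blast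
  have "(z * int a + d) mod int p = c mod int p \<longleftrightarrow> int a = ((c - d) * w) mod int p"
    if a: "a < p" for a d c
  proof
    assume "(z * int a + d) mod int p = c mod int p"
    then have zad: "[z * int a + d = c] (mod int p)" by (simp add: cong_def)
    have "[int a = z * w * int a] (mod int p)"
      using cong_scalar_right[OF w, of "int a"] by (simp add: cong_sym)
    also have "z * w * int a = (z * int a + d) * w - d * w" by (simp add: algebra_simps)
    also have "[\<dots> = c * w - d * w] (mod int p)"
      by (intro cong_diff cong_scalar_right zad cong_refl)
    also have "c * w - d * w = (c - d) * w" by (simp add: algebra_simps)
    finally show "int a = ((c - d) * w) mod int p"
      using a by (simp add: cong_def)
  next
    assume "int a = ((c - d) * w) mod int p"
    then have "[z * int a + d = z * w * (c - d) + d] (mod int p)"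
      by (intro cong_add cong_refl) (simp add: cong_def mod_mult_right_eq algebra_simps)
    also have "[z * w * (c - d) + d = 1 * (c - d) + d] (mod int p)"
      by (intro cong_add cong_scalar_right w cong_refl)
    finally show "(z * int a + d) mod int p = c mod int p" by (simp add: cong_def)
  qed
  then show ?thesis by blast
qed

lemma sum_fun_upd_split:
  fixes z :: "nat \<Rightarrow> int"
  assumes "j < b"
  shows "(\<Sum>l<b. z l * int ((r(j := a)) l)) = z j * int a + (\<Sum>l<b. z l * int ((r(j := 0)) l))"
proof -
  have "(\<Sum>l<b. z l * int ((r(j := a)) l))
      = (\<Sum>l<b. (if l = j then z j * int a else 0) + z l * int ((r(j := 0)) l))"
    by (rule sum.cong) simp_all
  then show ?thesis using assms by (simp add: sum.distrib)
qed

lemma bij_betw_fun_upd_transversal: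
  assumes H: "H \<subseteq> R"
    and closed: "\<And>r a. r \<in> R \<Longrightarrow> a < p \<Longrightarrow> r(j := a) \<in> R"
    and coord: "\<And>r. r \<in> R \<Longrightarrow> r j < p"
    and transversal: "\<And>r. r \<in> R \<Longrightarrow> \<exists>!a. a < p \<and> r(j := a) \<in> H"
  shows "bij_betw (\<lambda>(r, a). r(j := a)) (H \<times> {..<p}) R"
proof (rule bij_betw_imageI)
  show "inj_on (\<lambda>(r, a). r(j := a)) (H \<times> {..<p})"
  proof (rule inj_onI, clarify)
    fix r a s a' assume r: "r \<in> H" and s: "s \<in> H" and eq: "r(j := a) = s(j := a')"
    have "s = (s(j := a'))(j := s j)" by simp
    also have "\<dots> = (r(j := a))(j := s j)" by (simp only: eq)
    also have "\<dots> = r(j := s j)" by simp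
    finally have "r(j := s j) \<in> H" using s by simp
    moreover have "r(j := r j) \<in> H" "r j < p" "s j < p" using r s H coord by auto
    ultimately have "r j = s j" using transversal[of r] H r by blast
    have "r l = s l" for l
      using fun_cong[OF eq, of l] \<open>r j = s j\<close> by (cases "l = j") auto
    then show "r = s \<and> a = a'" using fun_cong[OF eq, of j] by auto
  qed
  show "(\<lambda>(r, a). r(j := a)) ` (H \<times> {..<p}) = R"
  proof
    show "(\<lambda>(r, a). r(j := a)) ` (H \<times> {..<p}) \<subseteq> R" using H by (auto intro: closed)
    show "R \<subseteq> (\<lambda>(r, a). r(j := a)) ` (H \<times> {..<p})"
    proof
      fix r assume r: "r \<in> R"
      then obtain a where "a < p" "r(j := a) \<in> H" using transversal by blast
      moreover have "r = (r(j := a))(j := r j)" by simp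
      ultimately show "r \<in> (\<lambda>(r, a). r(j := a)) ` (H \<times> {..<p})"
        using coord[OF r] by (intro image_eqI[where x = "(r(j := a), r j)"]) auto
    qed
  qed
qed

lemma card_hyperplane_inter_coordinate_closed:
  fixes z :: "nat \<Rightarrow> int"
  assumes p: "prime p" and j: "j < b" and RF: "R \<subseteq> Fpn p b"
    and closed: "\<And>r a. r \<in> R \<Longrightarrow> a < p \<Longrightarrow> r(j := a) \<in> R"
    and zj: "\<not> int p dvd z j"
  shows "card {r\<in>R. (\<Sum>l<b. z l * int (r l)) mod int p = c mod int p} * p = card R"
proof -
  let ?H = "{r\<in>R. (\<Sum>l<b. z l * int (r l)) mod int p = c mod int p}"
  obtain w where w: "\<forall>a d c. a < p \<longrightarrow>
      ((z j * int a + d) mod int p = c mod int p \<longleftrightarrow> int a = ((c - d) * w) mod int p)"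
    using linear_congruence_solve[OF p zj] by (elim exE)
  define t where "t r = ((c - (\<Sum>l<b. z l * int ((r(j := 0)) l))) * w) mod int p" for r
  have on_H: "(\<Sum>l<b. z l * int ((r(j := a)) l)) mod int p = c mod int p \<longleftrightarrow> int a = t r"
    if "a < p" for r a
    using w[rule_format, OF that, of "\<Sum>l<b. z l * int ((r(j := 0)) l)" c]
    by (simp only: sum_fun_upd_split[OF j, of z r a] t_def)
  have t_range: "0 \<le> t r" "t r < int p" for r using prime_gt_0_nat[OF p] by (simp_all add: t_def)
  have "\<exists>!a. a < p \<and> r(j := a) \<in> ?H" if r: "r \<in> R" for r
  proof (rule ex1I[of _ "nat (t r)"])
    show "nat (t r) < p \<and> r(j := nat (t r)) \<in> ?H"
      using on_H[of "nat (t r)" r] closed[OF r] t_range[of r] by (simp add: nat_less_iff)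
    show "a = nat (t r)" if "a < p \<and> r(j := a) \<in> ?H" for a
      using on_H[of a r] that by auto
  qed
  then have "bij_betw (\<lambda>(r, a). r(j := a)) (?H \<times> {..<p}) R"
    using RF j closed by (intro bij_betw_fun_upd_transversal) (auto intro: Fpn_less)
  then have "card (?H \<times> {..<p}) = card R" by (rule bij_betw_same_card)
  then show ?thesis by (simp add: card_cartesian_product)
qed

lemma card_kernel_linear_form:
  fixes z :: "nat \<Rightarrow> int"
  assumes p: "prime p"
  shows "card {\<eta>\<in>Fpn p m. (\<Sum>i<m. z i * int (\<eta> i)) mod int p = 0}
    = (if \<forall>i<m. int p dvd z i then p ^ m else p ^ (m - 1))"
proof (cases "\<forall>i<m. int p dvd z i")
  case True
  then have "int p dvd (\<Sum>i<m. z i * int (\<eta> i))" for \<eta> by (auto intro!: dvd_sum)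
  then show ?thesis using True by simp
next
  case False
  then obtain i where i: "i < m" "\<not> int p dvd z i" by blast
  have "r(i := a) \<in> Fpn p m" if "r \<in> Fpn p m" "a < p" for r a
    using that i(1) by (auto simp: Fpn_def)
  then have "card {\<eta>\<in>Fpn p m. (\<Sum>l<m. z l * int (\<eta> l)) mod int p = 0 mod int p} * p = p ^ m"
    using card_hyperplane_inter_coordinate_closed[where R = "Fpn p m" and c = 0 and z = z and j = i,
        OF p i(1) subset_refl _ i(2)]
    by simp
  moreover obtain m' where "m = Suc m'" using i(1) by (cases m) auto
  ultimately have "card {\<eta>\<in>Fpn p m. (\<Sum>l<m. z l * int (\<eta> l)) mod int p = 0} = p ^ (m - 1)"
    using prime_gt_0_nat[OF p] by (simp add: mult.commute)
  then show ?thesis using False by (simp only: if_False)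
qed

lemma sum_card_filter_swap:
  assumes "finite S" "finite A"
  shows "(\<Sum>s\<in>S. card {x\<in>A. P s x}) = (\<Sum>x\<in>A. card {s\<in>S. P s x})"
proof -
  have count: "card {x\<in>B. Q x} = (\<Sum>x\<in>B. if Q x then 1 else 0)" if "finite B" for B :: "'c set" and Q
    using that by (simp add: sum.If_cases Int_def)
  have "(\<Sum>s\<in>S. card {x\<in>A. P s x}) = (\<Sum>s\<in>S. \<Sum>x\<in>A. if P s x then 1 else 0)"
    using count[OF assms(2)] by simp
  also have "\<dots> = (\<Sum>x\<in>A. \<Sum>s\<in>S. if P s x then 1 else 0)" by (rule sum.swap)
  also have "\<dots> = (\<Sum>x\<in>A. card {s\<in>S. P s x})"
    using count[OF assms(1)] by simp
  finally show ?thesis .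
qed

lemma sum_if_const:
  assumes fin: "finite X"
  shows "real (\<Sum>x\<in>X. if P x then a else b)
    = real a * real (card {x\<in>X. P x}) + real b * (real (card X) - real (card {x\<in>X. P x}))"
proof -
  have split: "X \<inter> {x. P x} = {x\<in>X. P x}" "X \<inter> - {x. P x} = X - {x\<in>X. P x}" by auto
  have "card (X - {x\<in>X. P x}) = card X - card {x\<in>X. P x}"
    using fin by (intro card_Diff_subset) auto
  moreover have "card {x\<in>X. P x} \<le> card X" using fin by (intro card_mono) auto
  ultimately show ?thesis
    using fin by (simp add: sum.If_cases split of_nat_diff)
qed

lemma card_diagonal: "card {x\<in>E \<times> E. fst x = snd x} = card E"
proof -
  have "{x\<in>E \<times> E. fst x = snd x} = (\<lambda>u. (u, u)) ` E" by auto
  then show ?thesis by (simp add: card_image inj_on_def)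
qed

lemma sum_lessThan_add_split:
  fixes k m :: nat
  shows "(\<Sum>l<k + m. f l) = (\<Sum>j<k. f j) + (\<Sum>i<m. f (k + i))"
  by (induction m) (simp_all add: add.assoc)

text \<open>Cauchy-Schwarz over the fibres of f.\<close>
lemma card_sq_le_card_image_mult_collisions:
  assumes fin: "finite E"
  shows "real (card E)^2 \<le> real (card (f ` E)) * real (card {(u, v)\<in>E \<times> E. f u = f v})"
proof -
  let ?F = "\<lambda>y. {u\<in>E. f u = y}"
  have E_eq: "E = (\<Union>y\<in>f ` E. ?F y)" by auto
  have card_E: "card E = (\<Sum>y\<in>f ` E. card (?F y))"
    by (subst E_eq, rule card_UN_disjoint) (use fin in auto)
  have pairs_eq: "{(u, v)\<in>E \<times> E. f u = f v} = (\<Union>y\<in>f ` E. ?F y \<times> ?F y)" by auto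
  have card_pairs: "card {(u, v)\<in>E \<times> E. f u = f v} = (\<Sum>y\<in>f ` E. card (?F y) * card (?F y))"
    by (subst pairs_eq, subst card_UN_disjoint) (use fin in \<open>auto simp: card_cartesian_product\<close>)
  show ?thesis
    using sum_squared_le_sum_of_squares[of "\<lambda>y. real (card (?F y))" "f ` E"]
    unfolding card_E card_pairs by (simp add: power2_eq_square mult.commute)
qed

section \<open>Roots of polynomials modulo a prime\<close>

lemma poly_many_roots_mod_prime_imp_multiple:
  fixes f :: "int poly"
  assumes p: "prime p" and fin: "finite X" and roots: "\<forall>x\<in>X. int p dvd poly f x"
    and distinct: "\<forall>x\<in>X. \<forall>y\<in>X. x \<noteq> y \<longrightarrow> \<not> int p dvd (x - y)"
    and deg: "degree f < card X"
  shows "\<exists>g. f = smult (int p) g"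
  using fin roots distinct deg
proof (induction "degree f" arbitrary: f X)
  case 0
  then obtain x where x: "x \<in> X" by fastforce
  have f: "f = [:coeff f 0:]" using 0(1) by (metis degree_0_id)
  have "poly f x = coeff f 0" by (subst f) simp
  then have "int p dvd coeff f 0" using 0(3) x by metis
  then obtain k where "coeff f 0 = int p * k" by blast
  then have "f = smult (int p) [:k:]" using f by simp
  then show ?case by blast
next
  case (Suc n)
  then obtain r where r: "r \<in> X" by fastforce
  define q where "q = synthetic_div f r"
  have fq: "f = [:-r, 1:] * q + [:poly f r:]"
    unfolding q_def by (rule synthetic_div_correct'[symmetric])
  have dq: "n = degree q" unfolding q_def using Suc(2) by (simp add: degree_synthetic_div)
  have "int p dvd poly q x" if x: "x \<in> X - {r}" for x
  proof -
    have "poly f x = (x - r) * poly q x + poly f r"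
      by (subst fq) (simp add: algebra_simps)
    then have "int p dvd (x - r) * poly q x"
      using Suc(4) x r by (metis DiffD1 add_diff_cancel_right' dvd_diff)
    moreover have "\<not> int p dvd (x - r)" using Suc(5) x r by blast
    ultimately show ?thesis using p by (simp add: prime_dvd_mult_iff)
  qed
  moreover have "degree q < card (X - {r})" using Suc(2,3,6) r dq by simp
  ultimately obtain g where g: "q = smult (int p) g"
    using Suc(1)[OF dq, of "X - {r}"] Suc(3,5) by blast
  obtain k where k: "poly f r = int p * k" using Suc(4) r by blast
  have "f = smult (int p) ([:-r, 1:] * g + [:k:])"
    using fq g k by (simp add: smult_add_right)
  then show ?case by blast
qed

lemma card_roots_mod_prime_le:
  fixes f :: "int poly"
  assumes p: "prime p" and nz: "\<not> int p dvd coeff f i"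
  shows "card {s. s < p \<and> int p dvd poly f (int s)} \<le> degree f"
proof (rule ccontr)
  let ?X = "int ` {s. s < p \<and> int p dvd poly f (int s)}"
  assume "\<not> ?thesis"
  then have many: "degree f < card ?X" by (simp add: card_image)
  have distinct: "\<not> int p dvd (x - y)" if xy: "x \<in> ?X" "y \<in> ?X" "x \<noteq> y" for x y
  proof -
    obtain s t where "x = int s" "y = int t" "s < p" "t < p" using xy(1,2) by blast
    then show ?thesis using xy(3) by (simp add: int_dvd_diff_iff_eq)
  qed
  have "\<exists>g. f = smult (int p) g"
  proof (rule poly_many_roots_mod_prime_imp_multiple[OF p])
    show "finite ?X" by simp
    show "\<forall>x\<in>?X. int p dvd poly f x" by blast
    show "\<forall>x\<in>?X. \<forall>y\<in>?X. x \<noteq> y \<longrightarrow> \<not> int p dvd (x - y)" using distinct by blast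
  qed (rule many)
  then show False using nz by auto
qed

lemma card_moment_roots_le:
  fixes v :: "nat \<Rightarrow> int"
  assumes p: "prime p" and q0: "q0 < d" "\<not> int p dvd v q0"
  shows "card {s. s < p \<and> ((\<Sum>q<d. v q * int s ^ Suc q) + e) mod int p = 0} \<le> d"
proof -
  define f where "f = (\<Sum>q<d. monom (v q) (Suc q)) + [:e:]"
  have poly_f: "poly f x = (\<Sum>q<d. v q * x ^ Suc q) + e" for x
    by (simp add: f_def poly_sum poly_monom)
  have "coeff f (Suc q0) = (\<Sum>q<d. if q = q0 then v q else 0)"
    unfolding f_def by (simp add: coeff_sum coeff_monom)
  then have coeff_f: "coeff f (Suc q0) = v q0" using q0(1) by simp
  have "degree (\<Sum>q<d. monom (v q) (Suc q)) \<le> d"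
    by (intro degree_sum_le) (auto intro: order.trans[OF degree_monom_le])
  then have "degree f \<le> d" unfolding f_def using degree_add_le by fastforce
  moreover have "card {s. s < p \<and> int p dvd poly f (int s)} \<le> degree f"
    using card_roots_mod_prime_le[OF p, of f "Suc q0"] coeff_f q0(2) by simp
  ultimately show ?thesis by (simp add: poly_f dvd_eq_mod_eq_0)
qed

section \<open>Sets meeting every affine hyperplane sparsely\<close>

definition hyperplane_sparse :: "nat \<Rightarrow> nat \<Rightarrow> nat \<Rightarrow> (nat \<Rightarrow> nat) set \<Rightarrow> bool" where
  "hyperplane_sparse p b c R \<longleftrightarrow> (\<forall>z l0 e. l0 < b \<longrightarrow> \<not> int p dvd z l0 \<longrightarrow>
     card {r\<in>R. (\<Sum>l<b. z l * int (r l)) mod int p = e mod int p} * p \<le> c * card R)"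

lemma hyperplane_sparse_mono:
  assumes sparse: "hyperplane_sparse p b c R" and "c \<le> c'"
  shows "hyperplane_sparse p b c' R"
  unfolding hyperplane_sparse_def
proof (intro allI impI)
  fix z l0 e assume "l0 < b" "\<not> int p dvd z l0"
  then have "card {r\<in>R. (\<Sum>l<b. z l * int (r l)) mod int p = e mod int p} * p \<le> c * card R"
    using sparse unfolding hyperplane_sparse_def by blast
  also have "\<dots> \<le> c' * card R" using \<open>c \<le> c'\<close> by simp
  finally show "card {r\<in>R. (\<Sum>l<b. z l * int (r l)) mod int p = e mod int p} * p \<le> c' * card R" .
qed

text \<open>The sparse sets are products F_p^h \<times> C where C is the moment curve
  s \<mapsto> (s, s^2, ..., s^(b-h)) thickened by t \<le> p translates in its second coordinate;
  they have p^(h+1) t points, which realises every size between p and p^b.\<close>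

definition curve_coord :: "nat \<Rightarrow> nat \<Rightarrow> nat \<Rightarrow> nat \<Rightarrow> nat" where
  "curve_coord p q s c = (s ^ Suc q + (if q = 1 then c else 0)) mod p"

definition curve_point :: "nat \<Rightarrow> nat \<Rightarrow> nat \<Rightarrow> (nat \<Rightarrow> nat) \<Rightarrow> nat \<Rightarrow> nat \<Rightarrow> (nat \<Rightarrow> nat)" where
  "curve_point p h b \<tau> s c =
     (\<lambda>l. if l < h then \<tau> l else if l < b then curve_coord p (l - h) s c else 0)"

definition thick_curve :: "nat \<Rightarrow> nat \<Rightarrow> nat \<Rightarrow> nat \<Rightarrow> (nat \<Rightarrow> nat) set" where
  "thick_curve p h b t = (\<lambda>(\<tau>, s, c). curve_point p h b \<tau> s c) ` (Fpn p h \<times> {..<p} \<times> {..<t})"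

lemma thick_curve_subset_Fpn: "p > 0 \<Longrightarrow> h \<le> b \<Longrightarrow> thick_curve p h b t \<subseteq> Fpn p b"
  by (auto simp: thick_curve_def curve_point_def curve_coord_def Fpn_def)

lemma card_thick_curve:
  assumes hb: "h + 2 \<le> b" and tp: "t \<le> p"
  shows "card (thick_curve p h b t) = p ^ Suc h * t"
proof -
  have "inj_on (\<lambda>(\<tau>, s, c). curve_point p h b \<tau> s c) (Fpn p h \<times> {..<p} \<times> {..<t})"
  proof (rule inj_onI, clarsimp)
    fix \<tau> s c \<tau>' s' c'
    assume A: "\<tau> \<in> Fpn p h" "s < p" "c < t" "\<tau>' \<in> Fpn p h" "s' < p" "c' < t"
      and eq: "curve_point p h b \<tau> s c = curve_point p h b \<tau>' s' c'"
    have "\<tau> l = \<tau>' l" for l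
      using fun_cong[OF eq, of l]
      by (cases "l < h") (auto simp: curve_point_def Fpn_zero_beyond[OF A(1)] Fpn_zero_beyond[OF A(4)])
    then have \<tau>: "\<tau> = \<tau>'" by blast
    have "curve_coord p 0 s c = curve_coord p 0 s' c'"
      using fun_cong[OF eq, of h] hb by (simp add: curve_point_def)
    then have s: "s = s'" using A by (simp add: curve_coord_def)
    have "curve_coord p 1 s c = curve_coord p 1 s' c'"
      using fun_cong[OF eq, of "Suc h"] hb by (simp add: curve_point_def)
    then have "int ((s ^ 2 + c) mod p) = int ((s ^ 2 + c') mod p)"
      using s by (simp add: curve_coord_def power2_eq_square)
    then have "(int (s ^ 2) + int c) mod int p = (int (s ^ 2) + int c') mod int p"
      by (simp add: of_nat_mod)
    then have "int p dvd (int (s ^ 2) + int c) - (int (s ^ 2) + int c')"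
      by (simp only: mod_eq_dvd_iff)
    moreover have "c < p" "c' < p" using A tp by auto
    ultimately have "c = c'" by (simp add: int_dvd_diff_iff_eq)
    with \<tau> s show "\<tau> = \<tau>' \<and> s = s' \<and> c = c'" by blast
  qed
  then show ?thesis by (simp add: thick_curve_def card_image card_cartesian_product)
qed

lemma curve_point_dot_mod:
  fixes v :: "nat \<Rightarrow> int"
  assumes hb: "h + 2 \<le> b" and vh: "\<forall>j<h. int p dvd v j"
  shows "(\<Sum>l<b. v l * int (curve_point p h b \<tau> s c l)) mod int p
       = ((\<Sum>q<b - h. v (h + q) * int s ^ Suc q) + v (h + 1) * int c) mod int p"
proof -
  let ?f = "\<lambda>l. v l * int (curve_point p h b \<tau> s c l)"
  have "(\<Sum>l<b. ?f l) = (\<Sum>j<h. ?f j) + (\<Sum>q<b - h. ?f (h + q))"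
    using sum_lessThan_add_split[where k = h and m = "b - h" and f = ?f] hb by simp
  moreover have "[\<Sum>j<h. ?f j = 0] (mod int p)"
    using vh by (auto simp: cong_0_iff intro!: dvd_sum)
  ultimately have "[\<Sum>l<b. ?f l = 0 + (\<Sum>q<b - h. ?f (h + q))] (mod int p)"
    by (simp only: cong_add cong_refl)
  then have "[\<Sum>l<b. ?f l = \<Sum>q<b - h. ?f (h + q)] (mod int p)" by simp
  also have "[\<Sum>q<b - h. ?f (h + q)
      = \<Sum>q<b - h. v (h + q) * (int s ^ Suc q + (if q = 1 then int c else 0))] (mod int p)"
    by (intro cong_sum cong_scalar_left)
      (simp add: curve_point_def curve_coord_def cong_def of_nat_mod)
  also have "(\<Sum>q<b - h. v (h + q) * (int s ^ Suc q + (if q = 1 then int c else 0)))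
      = (\<Sum>q<b - h. v (h + q) * int s ^ Suc q) + (\<Sum>q<b - h. if q = 1 then v (h + q) * int c else 0)"
    by (subst sum.distrib[symmetric]) (rule sum.cong, simp_all add: distrib_left)
  also have "(\<Sum>q<b - h. if q = 1 then v (h + q) * int c else 0) = v (h + 1) * int c"
    using hb by simp
  finally show ?thesis by (simp add: cong_def)
qed

lemma thick_curve_coordinate_closed:
  assumes "j < h" "r \<in> thick_curve p h b t" "a < p"
  shows "r(j := a) \<in> thick_curve p h b t"
proof -
  obtain \<tau> s c where "\<tau> \<in> Fpn p h" "s < p" "c < t" and r: "r = curve_point p h b \<tau> s c"
    using assms(2) by (auto simp: thick_curve_def)
  moreover have "r(j := a) = curve_point p h b (\<tau>(j := a)) s c"
    using assms(1) by (auto simp: r curve_point_def)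
  moreover have "\<tau>(j := a) \<in> Fpn p h" using \<open>\<tau> \<in> Fpn p h\<close> assms by (auto simp: Fpn_def)
  ultimately show ?thesis unfolding thick_curve_def by (intro image_eqI[where x = "(\<tau>(j := a), s, c)"]) auto
qed

text \<open>A hyperplane that only involves curve coordinates meets each translate of the curve in
  at most as many points as the degree of the curve, by counting roots modulo p.\<close>
lemma card_thick_curve_inter_hyperplane_le:
  fixes v :: "nat \<Rightarrow> int"
  assumes p: "prime p" and hb: "h + 2 \<le> b" and tp: "t \<le> p"
    and vh: "\<forall>j<h. int p dvd v j" and l0: "l0 < b" "\<not> int p dvd v l0"
  shows "card {r\<in>thick_curve p h b t. (\<Sum>l<b. v l * int (r l)) mod int p = e mod int p} * p
         \<le> (b - h) * card (thick_curve p h b t)"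
proof -
  define d where "d = b - h"
  define Roots where "Roots c = {s. s < p \<and> ((\<Sum>q<d. v (h + q) * int s ^ Suc q) + (v (h + 1) * int c - e)) mod int p = 0}" for c
  define X where "X = (SIGMA c:{..<t}. Roots c)"
  have "h \<le> l0" using vh l0 by (meson not_le)
  then have "card (Roots c) \<le> d" for c
    unfolding Roots_def using card_moment_roots_le[OF p, of "l0 - h" d "\<lambda>q. v (h + q)"] l0
    by (simp add: d_def)
  moreover have "finite (Roots c)" for c by (simp add: Roots_def)
  ultimately have card_X: "card X \<le> t * d"
    using sum_mono[of "{..<t}" "\<lambda>c. card (Roots c)" "\<lambda>_. d"] by (simp add: X_def card_SigmaI)
  have "{r\<in>thick_curve p h b t. (\<Sum>l<b. v l * int (r l)) mod int p = e mod int p}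
      \<subseteq> (\<lambda>(\<tau>, c, s). curve_point p h b \<tau> s c) ` (Fpn p h \<times> X)"
  proof clarify
    fix r assume r: "r \<in> thick_curve p h b t" and on: "(\<Sum>l<b. v l * int (r l)) mod int p = e mod int p"
    then obtain \<tau> s c where tsc: "\<tau> \<in> Fpn p h" "s < p" "c < t" "r = curve_point p h b \<tau> s c"
      by (auto simp: thick_curve_def)
    have "((\<Sum>q<d. v (h + q) * int s ^ Suc q) + v (h + 1) * int c) mod int p = e mod int p"
      using on curve_point_dot_mod[OF hb vh, of \<tau> s c] tsc(4) by (simp add: d_def)
    then have "s \<in> Roots c"
      using tsc(2) by (simp add: Roots_def mod_eq_dvd_iff dvd_eq_mod_eq_0[symmetric] algebra_simps)
    then show "r \<in> (\<lambda>(\<tau>, c, s). curve_point p h b \<tau> s c) ` (Fpn p h \<times> X)"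
      using tsc by (force simp: X_def)
  qed
  moreover have "finite X" unfolding X_def Roots_def by auto
  ultimately have "card {r\<in>thick_curve p h b t. (\<Sum>l<b. v l * int (r l)) mod int p = e mod int p}
      \<le> card ((\<lambda>(\<tau>, c, s). curve_point p h b \<tau> s c) ` (Fpn p h \<times> X))"
    by (intro card_mono) auto
  also have "\<dots> \<le> card (Fpn p h \<times> X)" by (rule card_image_le) (simp add: \<open>finite X\<close>)
  also have "\<dots> \<le> p ^ h * (t * d)" using card_X by (simp add: card_cartesian_product)
  finally have "card {r\<in>thick_curve p h b t. (\<Sum>l<b. v l * int (r l)) mod int p = e mod int p} * p
      \<le> p ^ h * (t * d) * p" by simp
  also have "\<dots> = d * card (thick_curve p h b t)"
    by (simp add: card_thick_curve[OF hb tp] algebra_simps)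
  finally show ?thesis by (simp add: d_def)
qed

lemma thick_curve_hyperplane_sparse:
  assumes p: "prime p" and hb: "h + 2 \<le> b" and tp: "t \<le> p"
  shows "hyperplane_sparse p b (b - h) (thick_curve p h b t)"
  unfolding hyperplane_sparse_def
proof (intro allI impI)
  fix v :: "nat \<Rightarrow> int" and l0 e assume l0: "l0 < b" "\<not> int p dvd v l0"
  let ?R = "thick_curve p h b t"
  show "card {r\<in>?R. (\<Sum>l<b. v l * int (r l)) mod int p = e mod int p} * p \<le> (b - h) * card ?R"
  proof (cases "\<forall>j<h. int p dvd v j")
    case True
    then show ?thesis by (rule card_thick_curve_inter_hyperplane_le[where v = v, OF p hb tp _ l0])
  next
    case False
    then obtain j where j: "j < h" "\<not> int p dvd v j" by blast
    have "card {r\<in>?R. (\<Sum>l<b. v l * int (r l)) mod int p = e mod int p} * p = card ?R"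
      using j hb prime_gt_0_nat[OF p]
      by (intro card_hyperplane_inter_coordinate_closed[OF p _ thick_curve_subset_Fpn])
        (auto intro: thick_curve_coordinate_closed)
    moreover have "1 \<le> b - h" using hb by simp
    ultimately show ?thesis by simp
  qed
qed

lemma exists_hyperplane_sparse_set:
  fixes \<beta> :: real
  assumes \<beta>: "1 < \<beta>" "\<beta> \<le> real b" and p: "prime p"
  obtains R where "R \<subseteq> Fpn p b" "hyperplane_sparse p b b R"
    "real p powr \<beta> \<le> real (card R)" "real (card R) \<le> 2 * real p powr \<beta>"
proof -
  have p1: "real p > 1" using prime_gt_1_nat[OF p] by simp
  define h where "h = nat \<lceil>\<beta>\<rceil> - 2"
  define f where "f = \<beta> - real (Suc h)"
  have ceil: "2 \<le> \<lceil>\<beta>\<rceil>" "\<lceil>\<beta>\<rceil> \<le> int b" using \<beta> by (simp_all add: ceiling_le_iff)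
  then have "2 \<le> nat \<lceil>\<beta>\<rceil>" "nat \<lceil>\<beta>\<rceil> \<le> b" by (simp_all add: le_nat_iff nat_le_iff)
  then have hb: "h + 2 \<le> b" and "int (Suc h) = \<lceil>\<beta>\<rceil> - 1" unfolding h_def by arith+
  then have "real (Suc h) = real_of_int \<lceil>\<beta>\<rceil> - 1" by (metis of_int_1 of_int_diff of_int_of_nat_eq)
  then have f: "0 < f" "f \<le> 1" unfolding f_def by linarith+
  define t where "t = nat \<lceil>real p powr f\<rceil>"
  have pf: "1 \<le> real p powr f" "real p powr f \<le> real p"
    using p1 f powr_mono[of f 1 "real p"] by (simp_all add: ge_one_powr_ge_zero)
  have tp: "t \<le> p" using pf by (simp add: t_def nat_le_iff ceiling_le_iff)
  have t: "real p powr f \<le> real t" "real t \<le> 2 * real p powr f"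
    using pf by (simp_all add: t_def) linarith
  have "real p powr \<beta> = real p powr real (Suc h) * real p powr f"
    by (simp add: f_def flip: powr_add)
  moreover have "real p powr real (Suc h) = real p ^ Suc h"
    using p1 by (intro powr_realpow) simp
  ultimately have \<beta>_split: "real p powr \<beta> = real p ^ Suc h * real p powr f" by simp
  let ?R = "thick_curve p h b t"
  have "?R \<subseteq> Fpn p b" using hb p1 by (intro thick_curve_subset_Fpn) auto
  moreover have "hyperplane_sparse p b b ?R"
    using hyperplane_sparse_mono[OF thick_curve_hyperplane_sparse[OF p hb tp]] by simp
  moreover have "real (card ?R) = real p ^ Suc h * real t"
    by (simp add: card_thick_curve[OF hb tp])
  then have "real p powr \<beta> \<le> real (card ?R)" "real (card ?R) \<le> 2 * real p powr \<beta>"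
    using t p1 by (simp_all add: \<beta>_split)
  ultimately show thesis using that by blast
qed

section \<open>Graph subspaces\<close>

text \<open>Coordinates 0..k-1 of F_p^(k+m) are the base, coordinates k..k+m-1 the fibre.
  For an m \<times> k matrix M with entries in {0..<p}, the graph W_M = {(x, Mx)} is a
  k-dimensional subspace, and the coset of W_M containing u is determined by the label
  u_fibre - M u_base.\<close>

definition coset_label :: "nat \<Rightarrow> nat \<Rightarrow> nat \<Rightarrow> (nat \<Rightarrow> nat \<Rightarrow> nat) \<Rightarrow> (nat \<Rightarrow> nat) \<Rightarrow> nat \<Rightarrow> int" where
  "coset_label p k m M u =
     (\<lambda>i. if i < m then (int (u (k + i)) - (\<Sum>j<k. int (M i j) * int (u j))) mod int p else 0)"

definition graph_space :: "nat \<Rightarrow> nat \<Rightarrow> nat \<Rightarrow> (nat \<Rightarrow> nat \<Rightarrow> nat) \<Rightarrow> (nat \<Rightarrow> nat) set" where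
  "graph_space p k m M = {y \<in> Fpn p (k + m). coset_label p k m M y = (\<lambda>_. 0)}"

definition graph_basis :: "nat \<Rightarrow> nat \<Rightarrow> (nat \<Rightarrow> nat \<Rightarrow> nat) \<Rightarrow> nat \<Rightarrow> (nat \<Rightarrow> nat)" where
  "graph_basis k m M j = (\<lambda>l. if l = j then 1 else if k \<le> l \<and> l < k + m then M (l - k) j else 0)"

lemma mem_graph_space_iff:
  "y \<in> graph_space p k m M \<longleftrightarrow>
     y \<in> Fpn p (k + m) \<and> (\<forall>i<m. y (k + i) = (\<Sum>j<k. y j * M i j) mod p)"
proof -
  have "coset_label p k m M y i = 0 \<longleftrightarrow> y (k + i) = (\<Sum>j<k. y j * M i j) mod p"
    if y: "y \<in> Fpn p (k + m)" and i: "i < m" for i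
  proof -
    define s where "s = (\<Sum>j<k. y j * M i j)"
    have y_lt: "y (k + i) < p" using Fpn_less[OF y] i by simp
    have "(\<Sum>j<k. int (M i j) * int (y j)) = int s" by (simp add: s_def mult.commute)
    then have "coset_label p k m M y i = 0 \<longleftrightarrow> int (y (k + i)) mod int p = int s mod int p"
      using i by (simp add: coset_label_def mod_eq_dvd_iff dvd_eq_mod_eq_0[symmetric])
    also have "\<dots> \<longleftrightarrow> y (k + i) = s mod p" using y_lt by (simp flip: of_nat_mod)
    finally show ?thesis by (simp add: s_def)
  qed
  moreover have "coset_label p k m M y i = 0" if "\<not> i < m" for i
    using that by (simp add: coset_label_def)
  ultimately show ?thesis unfolding graph_space_def by (auto simp: fun_eq_iff)
qed

lemma lincomb_graph_basis:
  assumes len: "length cs = k" and cs: "\<forall>c\<in>set cs. c < p"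
  shows "lincomb p cs (map (graph_basis k m M) [0..<k]) =
    (\<lambda>l. if l < k then cs ! l else if l < k + m then (\<Sum>j<k. cs ! j * M (l - k) j) mod p else 0)"
proof
  fix l
  have L: "lincomb p cs (map (graph_basis k m M) [0..<k]) l = (\<Sum>j<k. cs ! j * graph_basis k m M j l) mod p"
    by (simp add: lincomb_def)
  show "lincomb p cs (map (graph_basis k m M) [0..<k]) l =
    (if l < k then cs ! l else if l < k + m then (\<Sum>j<k. cs ! j * M (l - k) j) mod p else 0)"
  proof (cases "l < k")
    case True
    have "(\<Sum>j<k. cs ! j * graph_basis k m M j l) = (\<Sum>j<k. if j = l then cs ! l else 0)"
      by (rule sum.cong) (use True in \<open>auto simp: graph_basis_def\<close>)
    moreover have "cs ! l < p" using cs len True by auto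
    ultimately show ?thesis using L True by simp
  next
    case False
    have "(\<Sum>j<k. cs ! j * graph_basis k m M j l) = (\<Sum>j<k. cs ! j * (if l < k + m then M (l - k) j else 0))"
      by (rule sum.cong) (use False in \<open>auto simp: graph_basis_def\<close>)
    then show ?thesis using L False by auto
  qed
qed

lemma graph_space_subset_fspan:
  "graph_space p k m M \<subseteq> fspan p (map (graph_basis k m M) [0..<k])"
proof
  fix y assume y: "y \<in> graph_space p k m M"
  define cs where "cs = map y [0..<k]"
  have len: "length cs = k" by (simp add: cs_def)
  have yF: "y \<in> Fpn p (k + m)" and fibre: "\<forall>i<m. y (k + i) = (\<Sum>j<k. y j * M i j) mod p"
    using y by (simp_all add: mem_graph_space_iff)
  then have cs: "\<forall>c\<in>set cs. c < p" by (auto simp: cs_def Fpn_less)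
  have "lincomb p cs (map (graph_basis k m M) [0..<k]) l = y l" for l
  proof -
    have lc: "lincomb p cs (map (graph_basis k m M) [0..<k]) l =
        (if l < k then cs ! l else if l < k + m then (\<Sum>j<k. cs ! j * M (l - k) j) mod p else 0)"
      using lincomb_graph_basis[OF len cs] by simp
    consider "l < k" | "k \<le> l" "l < k + m" | "k + m \<le> l" by linarith
    then show ?thesis
    proof cases
      case 2
      then have "y l = (\<Sum>j<k. y j * M (l - k) j) mod p" using fibre[rule_format, of "l - k"] by simp
      moreover have "(\<Sum>j<k. cs ! j * M (l - k) j) = (\<Sum>j<k. y j * M (l - k) j)"
        by (rule sum.cong) (simp_all add: cs_def)
      ultimately show ?thesis using 2 lc by simp
    qed (use lc in \<open>simp_all add: cs_def Fpn_zero_beyond[OF yF]\<close>)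
  qed
  then have "lincomb p cs (map (graph_basis k m M) [0..<k]) = y" by blast
  then show "y \<in> fspan p (map (graph_basis k m M) [0..<k])"
    unfolding fspan_def using len cs by force
qed

lemma fspan_subset_graph_space:
  assumes p: "p > 1"
  shows "fspan p (map (graph_basis k m M) [0..<k]) \<subseteq> graph_space p k m M"
proof
  fix y assume "y \<in> fspan p (map (graph_basis k m M) [0..<k])"
  then obtain cs where len: "length cs = k" and cs: "\<forall>c\<in>set cs. c < p"
    and y: "y = lincomb p cs (map (graph_basis k m M) [0..<k])" by (auto simp: fspan_def)
  then have y_eq: "y = (\<lambda>l. if l < k then cs ! l else if l < k + m then (\<Sum>j<k. cs ! j * M (l - k) j) mod p else 0)"
    using lincomb_graph_basis[OF len cs] by simp
  have "y \<in> Fpn p (k + m)" using p cs len by (auto simp: y_eq Fpn_def)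
  moreover have "(\<Sum>j<k. y j * M i j) = (\<Sum>j<k. cs ! j * M i j)" for i
    by (rule sum.cong) (simp_all add: y_eq)
  ultimately show "y \<in> graph_space p k m M" by (simp add: mem_graph_space_iff y_eq)
qed

lemma graph_basis_in_Fpn:
  "p > 1 \<Longrightarrow> \<forall>i<m. \<forall>j<k. M i j < p \<Longrightarrow> j < k \<Longrightarrow> graph_basis k m M j \<in> Fpn p (k + m)"
  by (auto simp: graph_basis_def Fpn_def)

lemma graph_space_in_Grass:
  assumes p: "p > 1" and M: "\<forall>i<m. \<forall>j<k. M i j < p"
  shows "graph_space p k m M \<in> Grass p (k + m) k"
proof -
  let ?vs = "map (graph_basis k m M) [0..<k]"
  have "set ?vs \<subseteq> Fpn p (k + m)" using graph_basis_in_Fpn[OF p M] by auto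
  moreover have "lin_indep p ?vs"
    unfolding lin_indep_def
  proof (intro allI impI)
    fix cs assume H: "length cs = length ?vs \<and> (\<forall>c\<in>set cs. c < p) \<and> lincomb p cs ?vs = (\<lambda>_. 0)"
    then have len: "length cs = k" and cs: "\<forall>c\<in>set cs. c < p" by auto
    have "cs ! l = 0" if "l < k" for l
    proof -
      have "lincomb p cs ?vs l = 0" using H by simp
      then show ?thesis using lincomb_graph_basis[OF len cs] that by simp
    qed
    then show "\<forall>c\<in>set cs. c = 0" using len by (auto simp: in_set_conv_nth)
  qed
  moreover have "graph_space p k m M = fspan p ?vs"
    using graph_space_subset_fspan fspan_subset_graph_space[OF p] by blast
  ultimately show ?thesis unfolding Grass_def by force
qed

lemma graph_space_neq:
  assumes p: "p > 1" and M: "\<forall>i<m. \<forall>j<k. M i j < p" and M': "\<forall>i<m. \<forall>j<k. M' i j < p"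
    and ij: "i < m" "j < k" "M i j \<noteq> M' i j"
  shows "graph_space p k m M \<noteq> graph_space p k m M'"
proof -
  have basis: "(\<Sum>j'<k. graph_basis k m M j j' * N i' j') = N i' j" for N i'
  proof -
    have "(\<Sum>j'<k. graph_basis k m M j j' * N i' j') = (\<Sum>j'<k. if j' = j then N i' j else 0)"
      by (rule sum.cong) (auto simp: graph_basis_def)
    then show ?thesis using ij by simp
  qed
  have fibre: "graph_basis k m M j (k + i') = M i' j" if "i' < m" for i'
    using that ij by (simp add: graph_basis_def)
  have "graph_basis k m M j \<in> graph_space p k m M"
    using graph_basis_in_Fpn[OF p M ij(2)] M ij(2)
    by (simp add: mem_graph_space_iff basis fibre)
  moreover have "M' i j mod p = M' i j" using M' ij by simp
  then have "graph_basis k m M j \<notin> graph_space p k m M'"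
    using ij by (auto simp: mem_graph_space_iff basis fibre)
  ultimately show ?thesis by blast
qed

lemma coset_label_vadd:
  "coset_label p k m M (vadd p x z) i = (coset_label p k m M x i + coset_label p k m M z i) mod int p"
proof (cases "i < m")
  case True
  let ?S = "\<lambda>u. \<Sum>j<k. int (M i j) * int (u j)"
  have v: "[int (vadd p x z l) = int (x l) + int (z l)] (mod int p)" for l
    by (simp add: vadd_def cong_def of_nat_mod)
  have "[?S (vadd p x z) = (\<Sum>j<k. int (M i j) * (int (x j) + int (z j)))] (mod int p)"
    by (intro cong_sum cong_scalar_left v)
  then have "[?S (vadd p x z) = ?S x + ?S z] (mod int p)"
    by (simp add: distrib_left sum.distrib)
  from cong_diff[OF v this]
  have "[int (vadd p x z (k + i)) - ?S (vadd p x z)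
      = (int (x (k + i)) - ?S x) + (int (z (k + i)) - ?S z)] (mod int p)"
    by (simp add: algebra_simps)
  then show ?thesis using True by (simp add: coset_label_def cong_def mod_add_eq)
qed (simp add: coset_label_def)

lemma coset_label_coset:
  assumes "e \<in> coset p x (graph_space p k m M)"
  shows "coset_label p k m M e = coset_label p k m M x"
proof
  fix i
  obtain z where z: "z \<in> graph_space p k m M" "e = vadd p x z"
    using assms by (auto simp: coset_def)
  then have "coset_label p k m M z i = 0" by (simp add: graph_space_def)
  then show "coset_label p k m M e i = coset_label p k m M x i"
    using coset_label_vadd[of p k m M x z i] z(2) by (simp add: coset_label_def)
qed

lemma self_in_coset_graph_space:
  assumes p: "p > 0" and e: "e \<in> Fpn p (k + m)"
  shows "e \<in> coset p e (graph_space p k m M)"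
proof -
  have "(\<lambda>_. 0) \<in> graph_space p k m M"
    using zero_in_Fpn[OF p] by (simp add: graph_space_def coset_label_def fun_eq_iff)
  moreover have "e l mod p = e l" for l
    using Fpn_less[OF e, of l] Fpn_zero_beyond[OF e, of l] by (cases "l < k + m") auto
  then have "vadd p e (\<lambda>_. 0) = e" by (simp add: vadd_def fun_eq_iff)
  ultimately show ?thesis unfolding coset_def by force
qed

lemma coset_subset_Fpn:
  assumes "p > 0" "W \<subseteq> Fpn p n" "x \<in> Fpn p n"
  shows "coset p x W \<subseteq> Fpn p n"
  using assms by (auto simp: coset_def vadd_def Fpn_def subset_iff)

lemma finite_proj:
  assumes "p > 0" "W \<subseteq> Fpn p n"
  shows "finite (proj p n W E)"
proof (rule finite_subset)
  show "proj p n W E \<subseteq> Pow (Fpn p n)"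
    using coset_subset_Fpn[OF assms] by (auto simp: proj_def)
qed simp

text \<open>Elements of E with different labels lie in different cosets of W_M.\<close>
lemma card_coset_label_le_card_proj:
  assumes p: "p > 0" and E: "E \<subseteq> Fpn p (k + m)"
  shows "card (coset_label p k m M ` E) \<le> card (proj p (k + m) (graph_space p k m M) E)"
proof -
  let ?W = "graph_space p k m M"
  let ?C = "(\<lambda>e. coset p e ?W) ` E"
  let ?label = "\<lambda>C. coset_label p k m M (SOME e. e \<in> C \<inter> E)"
  have fin: "finite (proj p (k + m) ?W E)"
    by (rule finite_proj[OF p]) (auto simp: graph_space_def)
  have self: "e \<in> coset p e ?W \<inter> E" if "e \<in> E" for e
    using self_in_coset_graph_space[OF p] that E by blast
  then have C: "?C \<subseteq> proj p (k + m) ?W E" using E by (auto simp: proj_def)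
  have "coset_label p k m M ` E \<subseteq> ?label ` ?C"
  proof
    fix y assume "y \<in> coset_label p k m M ` E"
    then obtain e where e: "e \<in> E" "y = coset_label p k m M e" by blast
    have "(SOME e'. e' \<in> coset p e ?W \<inter> E) \<in> coset p e ?W \<inter> E"
      using someI[where P = "\<lambda>e'. e' \<in> coset p e ?W \<inter> E", OF self[OF e(1)]] .
    then have "?label (coset p e ?W) = y" using coset_label_coset e(2) by blast
    then show "y \<in> ?label ` ?C" using e(1) by blast
  qed
  then have "card (coset_label p k m M ` E) \<le> card (?label ` ?C)"
    using finite_subset[OF C fin] by (intro card_mono) auto
  also have "\<dots> \<le> card ?C" using finite_subset[OF C fin] by (rule card_image_le)
  also have "\<dots> \<le> card (proj p (k + m) ?W E)" by (rule card_mono[OF fin C])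
  finally show ?thesis .
qed

section \<open>From energy to projections\<close>

definition graph_energy :: "nat \<Rightarrow> nat \<Rightarrow> nat \<Rightarrow> (nat \<Rightarrow> nat \<Rightarrow> nat) \<Rightarrow> (nat \<Rightarrow> nat) set \<Rightarrow> nat" where
  "graph_energy p k m M E = card {(u, v)\<in>E \<times> E. coset_label p k m M u = coset_label p k m M v}"

lemma card_small_projections_le_card_small_labels:
  assumes p: "p > 0" and E: "E \<subseteq> Fpn p (k + m)" and S: "finite S"
  shows "card {W \<in> graph_space p k m ` S. real (card (proj p (k + m) W E)) \<le> N}
    \<le> card {M\<in>S. real (card (coset_label p k m M ` E)) \<le> N}"
proof -
  let ?Bad = "{M\<in>S. real (card (coset_label p k m M ` E)) \<le> N}"
  have small: "{W \<in> graph_space p k m ` S. real (card (proj p (k + m) W E)) \<le> N} \<subseteq> graph_space p k m ` ?Bad"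
  proof
    fix W assume "W \<in> {W \<in> graph_space p k m ` S. real (card (proj p (k + m) W E)) \<le> N}"
    then obtain M where M: "M \<in> S" "W = graph_space p k m M" "real (card (proj p (k + m) W E)) \<le> N"
      by blast
    moreover have "card (coset_label p k m M ` E) \<le> card (proj p (k + m) W E)"
      using card_coset_label_le_card_proj[OF p E, of M] M(2) by simp
    ultimately have "real (card (coset_label p k m M ` E)) \<le> N"
      by (meson of_nat_le_iff order_trans)
    then show "W \<in> graph_space p k m ` ?Bad" using M by auto
  qed
  have "finite ?Bad" using S by simp
  then show ?thesis using card_mono[OF _ small] card_image_le[of ?Bad "graph_space p k m"] by force
qed

text \<open>By Cauchy-Schwarz, |E|^2 \<le> |\<pi>^(W_M)(E)| \<cdot> graph_energy, so few M can have small
  projections when the average energy is small.\<close>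
lemma card_small_projections_le:
  fixes S :: "(nat \<Rightarrow> nat \<Rightarrow> nat) set" and C N :: real
  assumes p: "p > 0" and E: "E \<subseteq> Fpn p (k + m)" "E \<noteq> {}" and N: "N > 0" and S: "finite S"
    and energy: "(\<Sum>M\<in>S. real (graph_energy p k m M E))
        \<le> C * real (card S) * (real (card E) + real (card E)^2 / real p ^ m)"
  shows "real (card {W \<in> graph_space p k m ` S. real (card (proj p (k + m) W E)) \<le> N})
    \<le> C * real (card S) * N * (1 / real (card E) + 1 / real p ^ m)"
proof -
  define e where "e = real (card E)"
  have e: "e > 0" using E finite_subset_Fpn[OF E(1)] by (simp add: e_def card_gt_0_iff)
  define Bad where "Bad = {M\<in>S. real (card (coset_label p k m M ` E)) \<le> N}"
  have "e^2 \<le> N * real (graph_energy p k m M E)" if "M \<in> Bad" for M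
  proof -
    have "e^2 \<le> real (card (coset_label p k m M ` E)) * real (graph_energy p k m M E)"
      unfolding e_def graph_energy_def
      by (rule card_sq_le_card_image_mult_collisions[OF finite_subset_Fpn[OF E(1)]])
    also have "\<dots> \<le> N * real (graph_energy p k m M E)"
      using that by (intro mult_right_mono) (auto simp: Bad_def)
    finally show ?thesis .
  qed
  then have "real (card Bad) * e^2 \<le> N * (\<Sum>M\<in>Bad. real (graph_energy p k m M E))"
    using sum_mono[of Bad "\<lambda>_. e^2"] by (simp add: sum_distrib_left)
  also have "\<dots> \<le> N * (\<Sum>M\<in>S. real (graph_energy p k m M E))"
    using S N by (intro mult_left_mono sum_mono2) (auto simp: Bad_def)
  also have "\<dots> \<le> N * (C * real (card S) * (e + e^2 / real p ^ m))"
    using energy N by (simp add: e_def)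
  also have "\<dots> = (C * real (card S) * N * (1 / e + 1 / real p ^ m)) * e^2"
    using e by (simp add: field_simps power2_eq_square)
  finally have "real (card Bad) \<le> C * real (card S) * N * (1 / e + 1 / real p ^ m)"
    using e by simp
  with card_small_projections_le_card_small_labels[OF p E(1) S, of N]
  show ?thesis unfolding e_def Bad_def by linarith
qed

definition low_energy_family :: "nat \<Rightarrow> nat \<Rightarrow> nat \<Rightarrow> real \<Rightarrow> (nat \<Rightarrow> nat \<Rightarrow> nat) set \<Rightarrow> bool" where
  "low_energy_family p k m C S \<longleftrightarrow> finite S \<and> (\<forall>M\<in>S. \<forall>i<m. \<forall>j<k. M i j < p)
     \<and> (\<forall>M\<in>S. \<forall>M'\<in>S. M \<noteq> M' \<longrightarrow> (\<exists>i<m. \<exists>j<k. M i j \<noteq> M' i j))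
     \<and> (\<forall>E. E \<subseteq> Fpn p (k + m) \<longrightarrow> (\<Sum>M\<in>S. real (graph_energy p k m M E))
            \<le> C * real (card S) * (real (card E) + real (card E)^2 / real p ^ m))"

lemma low_energy_family_projection_bound:
  assumes p: "prime p" and S: "low_energy_family p k m C S"
  shows "graph_space p k m ` S \<subseteq> Grass p (k + m) k \<and> card (graph_space p k m ` S) = card S \<and>
    (\<forall>E N. E \<subseteq> Fpn p (k + m) \<longrightarrow> E \<noteq> {} \<longrightarrow> N > (0::real) \<longrightarrow>
       real (card {W \<in> graph_space p k m ` S. real (card (proj p (k + m) W E)) \<le> N})
         \<le> C * real (card S) * N * (1 / real (card E) + real p powr (- real m)))"
proof -
  have p1: "p > 1" using prime_gt_1_nat[OF p] .
  have finS: "finite S" and entries: "\<forall>M\<in>S. \<forall>i<m. \<forall>j<k. M i j < p"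
    and distinct: "\<forall>M\<in>S. \<forall>M'\<in>S. M \<noteq> M' \<longrightarrow> (\<exists>i<m. \<exists>j<k. M i j \<noteq> M' i j)"
    and energy: "\<And>E. E \<subseteq> Fpn p (k + m) \<Longrightarrow> (\<Sum>M\<in>S. real (graph_energy p k m M E))
            \<le> C * real (card S) * (real (card E) + real (card E)^2 / real p ^ m)"
    using S unfolding low_energy_family_def by auto
  have "inj_on (graph_space p k m) S"
  proof (rule inj_onI, rule ccontr)
    fix M M' assume M: "M \<in> S" "M' \<in> S" "graph_space p k m M = graph_space p k m M'" "M \<noteq> M'"
    then obtain i j where "i < m" "j < k" "M i j \<noteq> M' i j" using distinct by blast
    then show False using graph_space_neq[OF p1] entries M by blast
  qed
  then have card: "card (graph_space p k m ` S) = card S" by (rule card_image)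
  have "real p powr (- real m) = 1 / real p ^ m"
    using p1 by (simp add: powr_minus powr_realpow divide_inverse)
  moreover have "graph_space p k m ` S \<subseteq> Grass p (k + m) k"
    using graph_space_in_Grass[OF p1] entries by blast
  moreover have "real (card {W \<in> graph_space p k m ` S. real (card (proj p (k + m) W E)) \<le> N})
      \<le> C * real (card S) * N * (1 / real (card E) + 1 / real p ^ m)"
    if "E \<subseteq> Fpn p (k + m)" "E \<noteq> {}" "N > 0" for E N
    using card_small_projections_le[OF _ that finS energy[OF that(1)]] p1 by simp
  ultimately show ?thesis using card by simp
qed

section \<open>Energy of row-product families\<close>

lemma coset_label_eq_iff:
  "coset_label p k m M u = coset_label p k m M v \<longleftrightarrow>
   (\<forall>i<m. (\<Sum>j<k. int (M i j) * (int (u j) - int (v j))) mod int p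
          = (int (u (k + i)) - int (v (k + i))) mod int p)"
proof -
  have "coset_label p k m M u i = coset_label p k m M v i \<longleftrightarrow>
     (\<Sum>j<k. int (M i j) * (int (u j) - int (v j))) mod int p = (int (u (k + i)) - int (v (k + i))) mod int p"
    if i: "i < m" for i
  proof -
    have "coset_label p k m M u i = coset_label p k m M v i \<longleftrightarrow>
      int p dvd (int (u (k + i)) - (\<Sum>j<k. int (M i j) * int (u j)))
                - (int (v (k + i)) - (\<Sum>j<k. int (M i j) * int (v j)))"
      using i by (simp add: coset_label_def mod_eq_dvd_iff)
    also have "(int (u (k + i)) - (\<Sum>j<k. int (M i j) * int (u j)))
                - (int (v (k + i)) - (\<Sum>j<k. int (M i j) * int (v j)))
       = (int (u (k + i)) - int (v (k + i))) - (\<Sum>j<k. int (M i j) * (int (u j) - int (v j)))"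
      by (simp add: sum_subtractf right_diff_distrib)
    also have "int p dvd \<dots> \<longleftrightarrow> (\<Sum>j<k. int (M i j) * (int (u j) - int (v j))) mod int p
        = (int (u (k + i)) - int (v (k + i))) mod int p"
      by (simp add: mod_eq_dvd_iff dvd_diff_commute)
    finally show ?thesis .
  qed
  note fibre = this
  have outside: "coset_label p k m M u i = coset_label p k m M v i" if "\<not> i < m" for i
    using that by (simp add: coset_label_def)
  show ?thesis
  proof
    assume "coset_label p k m M u = coset_label p k m M v"
    then show "\<forall>i<m. (\<Sum>j<k. int (M i j) * (int (u j) - int (v j))) mod int p
          = (int (u (k + i)) - int (v (k + i))) mod int p"
      using fibre by simp
  next
    assume "\<forall>i<m. (\<Sum>j<k. int (M i j) * (int (u j) - int (v j))) mod int p
          = (int (u (k + i)) - int (v (k + i))) mod int p"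
    then have "coset_label p k m M u i = coset_label p k m M v i" for i
      using fibre outside by (cases "i < m") simp_all
    then show "coset_label p k m M u = coset_label p k m M v" by blast
  qed
qed

lemma coset_label_neq_if_same_base:
  assumes u: "u \<in> Fpn p (k + m)" and v: "v \<in> Fpn p (k + m)"
    and base: "\<forall>j<k. u j = v j" and "u \<noteq> v"
  shows "coset_label p k m M u \<noteq> coset_label p k m M v"
proof
  assume eq: "coset_label p k m M u = coset_label p k m M v"
  have fibre: "int p dvd int (u (k + i)) - int (v (k + i))" if "i < m" for i
  proof -
    have "(\<Sum>j<k. int (M i j) * (int (u j) - int (v j))) = 0" using base by simp
    moreover have "(\<Sum>j<k. int (M i j) * (int (u j) - int (v j))) mod int p
        = (int (u (k + i)) - int (v (k + i))) mod int p"
      using eq that unfolding coset_label_eq_iff by blast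
    ultimately show ?thesis by (simp add: dvd_eq_mod_eq_0)
  qed
  have "int p dvd int (u l) - int (v l)" if "l < k + m" for l
  proof (cases "l < k")
    case False
    then show ?thesis using fibre[of "l - k"] that by simp
  qed (simp add: base)
  then show False using Fpn_eqI[OF u v] \<open>u \<noteq> v\<close> by blast
qed

lemma sum_graph_energy_le:
  fixes S :: "(nat \<Rightarrow> nat \<Rightarrow> nat) set" and K :: real
  assumes E: "E \<subseteq> Fpn p (k + m)" and S: "finite S" and K: "K \<ge> 0"
    and few: "\<And>u v. u \<in> E \<Longrightarrow> v \<in> E \<Longrightarrow> (\<exists>j<k. u j \<noteq> v j) \<Longrightarrow>
        real (card {M\<in>S. coset_label p k m M u = coset_label p k m M v}) \<le> K"
  shows "(\<Sum>M\<in>S. real (graph_energy p k m M E)) \<le> real (card S) * real (card E) + K * real (card E)^2"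
proof -
  have finE: "finite E" using finite_subset_Fpn[OF E] .
  let ?P = "\<lambda>M x. coset_label p k m M (fst x) = coset_label p k m M (snd x)"
  have "graph_energy p k m M E = card {x\<in>E \<times> E. ?P M x}" for M
    unfolding graph_energy_def by (rule arg_cong[where f = card]) auto
  then have "(\<Sum>M\<in>S. graph_energy p k m M E) = (\<Sum>x\<in>E \<times> E. card {M\<in>S. ?P M x})"
    using sum_card_filter_swap[OF S, of "E \<times> E" ?P] finE by simp
  then have "(\<Sum>M\<in>S. real (graph_energy p k m M E)) = (\<Sum>x\<in>E \<times> E. real (card {M\<in>S. ?P M x}))"
    by (simp flip: of_nat_sum)
  also have "\<dots> \<le> (\<Sum>x\<in>E \<times> E. (if fst x = snd x then real (card S) else 0) + K)"
  proof (rule sum_mono)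
    fix x assume x: "x \<in> E \<times> E"
    show "real (card {M\<in>S. ?P M x}) \<le> (if fst x = snd x then real (card S) else 0) + K"
    proof (cases "fst x = snd x \<or> (\<exists>j<k. fst x j \<noteq> snd x j)")
      case True
      moreover have "card {M\<in>S. ?P M x} \<le> card S" using S by (intro card_mono) auto
      moreover have "(\<exists>j<k. fst x j \<noteq> snd x j) \<Longrightarrow> real (card {M\<in>S. ?P M x}) \<le> K"
        using few[of "fst x" "snd x"] x by auto
      ultimately show ?thesis using K by auto
    next
      case False
      have uv: "fst x \<in> Fpn p (k + m)" "snd x \<in> Fpn p (k + m)" using x E by auto
      have empty: "{M\<in>S. ?P M x} = {}"
        using coset_label_neq_if_same_base[OF uv] False by auto
      show ?thesis unfolding empty using K by simp
    qed
  qed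
  also have "\<dots> = real (card S) * real (card {x\<in>E \<times> E. fst x = snd x}) + K * real (card E)^2"
    using finE by (simp add: sum.distrib sum.If_cases card_cartesian_product power2_eq_square Int_def mult.commute)
  finally show ?thesis by (simp only: card_diagonal)
qed

lemma card_PiE_le_power:
  fixes c :: real
  assumes "\<And>i. i < m \<Longrightarrow> real (card (B i)) \<le> c"
  shows "real (card (PiE {..<m} B)) \<le> c ^ m"
proof -
  have "real (card (PiE {..<m} B)) = (\<Prod>i<m. real (card (B i)))" by (simp add: card_PiE)
  also have "\<dots> \<le> (\<Prod>i<m. c)" by (rule prod_mono) (simp add: assms)
  finally show ?thesis by simp
qed

lemma card_hyperplane_le:
  assumes p: "prime p" and sparse: "hyperplane_sparse p b c R" and "l0 < b" "\<not> int p dvd z l0"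
  shows "real (card {r\<in>R. (\<Sum>l<b. z l * int (r l)) mod int p = e mod int p}) \<le> real c * real (card R) / real p"
proof -
  have "card {r\<in>R. (\<Sum>l<b. z l * int (r l)) mod int p = e mod int p} * p \<le> c * card R"
    using sparse assms(3,4) unfolding hyperplane_sparse_def by blast
  from of_nat_mono[OF this, where 'a = real]
  have "real (card {r\<in>R. (\<Sum>l<b. z l * int (r l)) mod int p = e mod int p}) * real p \<le> real c * real (card R)"
    by simp
  then show ?thesis using prime_gt_0_nat[OF p] by (simp add: field_simps)
qed

text \<open>For u, v with different bases, the m conditions M_i (u_base - v_base) = (u - v)_fibre,i
  are affine hyperplanes in the rows M_i, so independent rows from a hyperplane-sparse set
  satisfy all of them with probability at most (b/p)^m.\<close>
lemma card_rows_equal_labels_le: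
  assumes p: "prime p" and sparse: "hyperplane_sparse p k b R"
    and uv: "u \<in> Fpn p (k + m)" "v \<in> Fpn p (k + m)" and j0: "j0 < k" "u j0 \<noteq> v j0"
  shows "real (card {M\<in>PiE {..<m} (\<lambda>_. R). coset_label p k m M u = coset_label p k m M v})
    \<le> (real b * real (card R) / real p) ^ m"
proof -
  define z where "z j = int (u j) - int (v j)" for j
  have "u j0 < p" "v j0 < p" using uv j0 by (auto intro: Fpn_less)
  then have nz: "\<not> int p dvd z j0" using j0 by (simp add: z_def int_dvd_diff_iff_eq)
  define B where
    "B i = {r\<in>R. (\<Sum>l<k. z l * int (r l)) mod int p = (int (u (k + i)) - int (v (k + i))) mod int p}" for i
  have "coset_label p k m M u = coset_label p k m M v \<longleftrightarrow>
      (\<forall>i<m. (\<Sum>l<k. z l * int (M i l)) mod int p = (int (u (k + i)) - int (v (k + i))) mod int p)" for M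
  proof -
    have "(\<Sum>j<k. int (M i j) * (int (u j) - int (v j))) = (\<Sum>l<k. z l * int (M i l))" for i
      by (simp add: z_def mult.commute)
    then show ?thesis unfolding coset_label_eq_iff by simp
  qed
  then have "{M\<in>PiE {..<m} (\<lambda>_. R). coset_label p k m M u = coset_label p k m M v} = PiE {..<m} B"
    by (auto simp: B_def PiE_def Pi_def)
  moreover have "real (card (PiE {..<m} B)) \<le> (real b * real (card R) / real p) ^ m"
    unfolding B_def by (rule card_PiE_le_power, rule card_hyperplane_le[where z = z, OF p sparse j0(1) nz])
  ultimately show ?thesis by simp
qed

lemma low_energy_family_rows:
  assumes p: "prime p" and R: "R \<subseteq> Fpn p k" and b: "b \<ge> 1" and sparse: "hyperplane_sparse p k b R"
  shows "low_energy_family p k m (real b ^ m) (PiE {..<m} (\<lambda>_. R))"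
    and "card (PiE {..<m} (\<lambda>_. R)) = card R ^ m"
proof -
  let ?S = "PiE {..<m} (\<lambda>_. R)"
  have finS: "finite ?S" using finite_subset_Fpn[OF R] by (simp add: finite_PiE)
  show card_S: "card ?S = card R ^ m" by (simp add: card_PiE)
  have entries: "\<forall>M\<in>?S. \<forall>i<m. \<forall>j<k. M i j < p"
    using R by (auto simp: Fpn_def)
  have distinct: "\<exists>i<m. \<exists>j<k. M i j \<noteq> M' i j" if M: "M \<in> ?S" "M' \<in> ?S" "M \<noteq> M'" for M M'
  proof -
    obtain i where i: "i < m" "M i \<noteq> M' i" using M by (metis PiE_ext lessThan_iff)
    then obtain j where j: "M i j \<noteq> M' i j" by blast
    have "M i \<in> Fpn p k" "M' i \<in> Fpn p k" using M(1,2) i(1) R by auto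
    then have "j < k" using j by (metis (mono_tags, lifting) Fpn_def mem_Collect_eq not_le)
    then show ?thesis using i j by blast
  qed
  define K where "K = (real b * real (card R) / real p) ^ m"
  have energy: "(\<Sum>M\<in>?S. real (graph_energy p k m M E))
      \<le> real b ^ m * real (card ?S) * (real (card E) + real (card E)^2 / real p ^ m)"
    if E: "E \<subseteq> Fpn p (k + m)" for E
  proof -
    have "real (card {M\<in>?S. coset_label p k m M u = coset_label p k m M v}) \<le> K"
      if "u \<in> E" "v \<in> E" "\<exists>j<k. u j \<noteq> v j" for u v
      using that E card_rows_equal_labels_le[OF p sparse, of u m v] unfolding K_def by blast
    then have "(\<Sum>M\<in>?S. real (graph_energy p k m M E)) \<le> real (card ?S) * real (card E) + K * real (card E)^2"
      by (intro sum_graph_energy_le[OF E finS]) (simp_all add: K_def)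
    moreover have "K = real b ^ m * real (card ?S) / real p ^ m"
      by (simp add: K_def card_S power_divide power_mult_distrib)
    moreover have "1 \<le> real b ^ m" using b by simp
    then have "real (card ?S) * real (card E) \<le> real b ^ m * real (card ?S) * real (card E)"
      using mult_right_mono[of 1 "real b ^ m" "real (card ?S) * real (card E)"] by (simp add: mult.assoc)
    ultimately show ?thesis by (simp add: algebra_simps)
  qed
  show "low_energy_family p k m (real b ^ m) ?S"
    unfolding low_energy_family_def using finS entries distinct energy by blast
qed

section \<open>Energy of column-product families\<close>

definition line_energy :: "nat \<Rightarrow> nat \<Rightarrow> (nat \<Rightarrow> nat) set \<Rightarrow> (nat \<Rightarrow> nat) \<Rightarrow> nat" where
  "line_energy p n E \<xi> =
     card {x\<in>E \<times> E. (\<Sum>l<n. (int (fst x l) - int (snd x l)) * int (\<xi> l)) mod int p = 0}"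

lemma card_sq_le_line_energy:
  assumes p: "p > 0" and E: "finite E"
  shows "real (card E)^2 \<le> real p * real (line_energy p n E \<xi>)"
proof -
  define f where "f u = (\<Sum>l<n. int (u l) * int (\<xi> l)) mod int p" for u :: "nat \<Rightarrow> nat"
  have "f u = f v \<longleftrightarrow> (\<Sum>l<n. (int (u l) - int (v l)) * int (\<xi> l)) mod int p = 0" for u v
  proof -
    have "(\<Sum>l<n. (int (u l) - int (v l)) * int (\<xi> l))
        = (\<Sum>l<n. int (u l) * int (\<xi> l)) - (\<Sum>l<n. int (v l) * int (\<xi> l))"
      by (simp add: sum_subtractf left_diff_distrib)
    then show ?thesis by (simp add: f_def mod_eq_dvd_iff dvd_eq_mod_eq_0)
  qed
  then have pairs: "{(u, v)\<in>E \<times> E. f u = f v}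
      = {x\<in>E \<times> E. (\<Sum>l<n. (int (fst x l) - int (snd x l)) * int (\<xi> l)) mod int p = 0}" by auto
  have "f ` E \<subseteq> {0..<int p}" using p by (auto simp: f_def)
  then have "card (f ` E) \<le> p" using card_mono[of "{0..<int p}" "f ` E"] by simp
  then have "real (card (f ` E)) * real (card {(u, v)\<in>E \<times> E. f u = f v})
      \<le> real p * real (card {(u, v)\<in>E \<times> E. f u = f v})"
    by (intro mult_right_mono) auto
  with card_sq_le_card_image_mult_collisions[OF E, of f]
  show ?thesis unfolding line_energy_def pairs by linarith
qed

lemma sum_line_energy:
  assumes p: "prime p" and E: "E \<subseteq> Fpn p n"
  shows "real (\<Sum>\<xi>\<in>Fpn p n. line_energy p n E \<xi>)
    = real (card E) * real p ^ n + (real (card E)^2 - real (card E)) * real p ^ (n - 1)"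
proof -
  have finE: "finite E" using finite_subset_Fpn[OF E] .
  have "(\<forall>l<n. int p dvd int (fst x l) - int (snd x l)) \<longleftrightarrow> fst x = snd x" if "x \<in> E \<times> E" for x
  proof -
    have "fst x \<in> Fpn p n" "snd x \<in> Fpn p n" using that E by auto
    then show ?thesis using Fpn_eqI by auto
  qed
  then have "(\<Sum>\<xi>\<in>Fpn p n. line_energy p n E \<xi>)
      = (\<Sum>x\<in>E \<times> E. if fst x = snd x then p ^ n else p ^ (n - 1))"
    unfolding line_energy_def sum_card_filter_swap[OF finite_Fpn finite_cartesian_product[OF finE finE]]
    by (intro sum.cong refl) (simp add: card_kernel_linear_form[OF p])
  then have "real (\<Sum>\<xi>\<in>Fpn p n. line_energy p n E \<xi>)
      = real (p ^ n) * real (card {x\<in>E \<times> E. fst x = snd x})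
        + real (p ^ (n - 1)) * (real (card (E \<times> E)) - real (card {x\<in>E \<times> E. fst x = snd x}))"
    using sum_if_const[of "E \<times> E" "\<lambda>x. fst x = snd x" "p ^ n" "p ^ (n - 1)"] finE by simp
  then show ?thesis by (simp add: card_diagonal card_cartesian_product power2_eq_square algebra_simps)
qed

lemma coset_label_eq_iff_dvd:
  "coset_label p k m M u = coset_label p k m M v \<longleftrightarrow>
    (\<forall>i<m. int p dvd coset_label p k m M u i - coset_label p k m M v i)"
proof (cases "p = 0")
  case False
  then show ?thesis
    by (auto simp: fun_eq_iff coset_label_def mod_eq_dvd_iff[symmetric])
qed (auto simp: fun_eq_iff coset_label_def)

lemma sum_card_kernel_label_diff:
  assumes p: "prime p" and E: "E \<subseteq> Fpn p (k + m)"
  shows "real (\<Sum>\<eta>\<in>Fpn p m. card {x\<in>E \<times> E.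
      (\<Sum>i<m. (coset_label p k m M (fst x) i - coset_label p k m M (snd x) i) * int (\<eta> i)) mod int p = 0})
    = real p ^ m * real (graph_energy p k m M E)
      + real p ^ (m - 1) * (real (card E)^2 - real (graph_energy p k m M E))"
proof -
  have finE: "finite E" using finite_subset_Fpn[OF E] .
  let ?P = "\<lambda>x. coset_label p k m M (fst x) = coset_label p k m M (snd x)"
  have "(\<Sum>\<eta>\<in>Fpn p m. card {x\<in>E \<times> E.
      (\<Sum>i<m. (coset_label p k m M (fst x) i - coset_label p k m M (snd x) i) * int (\<eta> i)) mod int p = 0})
      = (\<Sum>x\<in>E \<times> E. if ?P x then p ^ m else p ^ (m - 1))"
    unfolding sum_card_filter_swap[OF finite_Fpn finite_cartesian_product[OF finE finE]]
    by (intro sum.cong refl) (simp add: card_kernel_linear_form[OF p] coset_label_eq_iff_dvd[symmetric])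
  then have "real (\<Sum>\<eta>\<in>Fpn p m. card {x\<in>E \<times> E.
      (\<Sum>i<m. (coset_label p k m M (fst x) i - coset_label p k m M (snd x) i) * int (\<eta> i)) mod int p = 0})
      = real (p ^ m) * real (card {x\<in>E \<times> E. ?P x})
        + real (p ^ (m - 1)) * (real (card (E \<times> E)) - real (card {x\<in>E \<times> E. ?P x}))"
    using sum_if_const[of "E \<times> E" ?P "p ^ m" "p ^ (m - 1)"] finE by simp
  moreover have "card {x\<in>E \<times> E. ?P x} = graph_energy p k m M E"
    unfolding graph_energy_def by (rule arg_cong[where f = card]) auto
  ultimately show ?thesis by (simp add: card_cartesian_product power2_eq_square)
qed

definition append_vec :: "nat \<Rightarrow> nat \<Rightarrow> (nat \<Rightarrow> nat) \<Rightarrow> (nat \<Rightarrow> nat) \<Rightarrow> (nat \<Rightarrow> nat)" where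
  "append_vec k m w \<eta> = (\<lambda>l. if l < k then w l else if l < k + m then \<eta> (l - k) else 0)"

text \<open>The vector -M^T \<eta>; the annihilator of W_M consists of the vectors (-M^T \<eta>, \<eta>).\<close>
definition dual_vec :: "nat \<Rightarrow> nat \<Rightarrow> nat \<Rightarrow> (nat \<Rightarrow> nat) \<Rightarrow> (nat \<Rightarrow> nat \<Rightarrow> nat) \<Rightarrow> (nat \<Rightarrow> nat)" where
  "dual_vec p k m \<eta> M = (\<lambda>j. if j < k then nat ((- (\<Sum>i<m. int (\<eta> i) * int (M i j))) mod int p) else 0)"

lemma append_vec_in_Fpn: "w \<in> Fpn p k \<Longrightarrow> \<eta> \<in> Fpn p m \<Longrightarrow> append_vec k m w \<eta> \<in> Fpn p (k + m)"
  by (auto simp: append_vec_def Fpn_def)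

lemma append_vec_inj:
  assumes "w \<in> Fpn p k" "\<eta> \<in> Fpn p m" "w' \<in> Fpn p k" "\<eta>' \<in> Fpn p m"
    and eq: "append_vec k m w \<eta> = append_vec k m w' \<eta>'"
  shows "w = w' \<and> \<eta> = \<eta>'"
proof -
  have "w l = w' l" for l
    using fun_cong[OF eq, of l] assms(1,3)
    by (cases "l < k") (auto simp: append_vec_def Fpn_zero_beyond not_less)
  moreover have "\<eta> i = \<eta>' i" for i
    using fun_cong[OF eq, of "k + i"] assms(2,4)
    by (cases "i < m") (auto simp: append_vec_def Fpn_zero_beyond not_less)
  ultimately show ?thesis by blast
qed

lemma dual_vec_in_Fpn: "p > 0 \<Longrightarrow> dual_vec p k m \<eta> M \<in> Fpn p k"
  by (auto simp: dual_vec_def Fpn_def nat_less_iff)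

lemma coset_label_dot_mod:
  assumes p: "p > 0"
  shows "[\<Sum>i<m. coset_label p k m M u i * int (\<eta> i)
        = \<Sum>l<k + m. int (u l) * int (append_vec k m (dual_vec p k m \<eta> M) \<eta> l)] (mod int p)"
proof -
  let ?Mu = "\<lambda>i. \<Sum>j<k. int (M i j) * int (u j)"
  let ?Mt\<eta> = "\<lambda>j. \<Sum>i<m. int (\<eta> i) * int (M i j)"
  have "[\<Sum>i<m. coset_label p k m M u i * int (\<eta> i)
      = \<Sum>i<m. (int (u (k + i)) - ?Mu i) * int (\<eta> i)] (mod int p)"
    by (intro cong_sum cong_scalar_right) (simp add: coset_label_def cong_def)
  also have "(\<Sum>i<m. (int (u (k + i)) - ?Mu i) * int (\<eta> i))
      = (\<Sum>j<k. int (u j) * - ?Mt\<eta> j) + (\<Sum>i<m. int (u (k + i)) * int (\<eta> i))"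
  proof -
    have "(\<Sum>i<m. ?Mu i * int (\<eta> i)) = (\<Sum>j<k. int (u j) * ?Mt\<eta> j)"
      by (simp add: sum_distrib_left sum_distrib_right sum.swap[of _ "{..<m}"] algebra_simps)
    then show ?thesis by (simp add: left_diff_distrib sum_subtractf sum_negf)
  qed
  also have "[\<dots> = (\<Sum>j<k. int (u j) * int (dual_vec p k m \<eta> M j)) + (\<Sum>i<m. int (u (k + i)) * int (\<eta> i))] (mod int p)"
    using p by (intro cong_add cong_sum cong_scalar_left cong_refl) (simp add: dual_vec_def cong_def)
  also have "(\<Sum>j<k. int (u j) * int (dual_vec p k m \<eta> M j)) + (\<Sum>i<m. int (u (k + i)) * int (\<eta> i))
      = (\<Sum>l<k + m. int (u l) * int (append_vec k m (dual_vec p k m \<eta> M) \<eta> l))"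
    by (simp add: sum_lessThan_add_split append_vec_def)
  finally show ?thesis .
qed

lemma card_kernel_label_diff_eq_line_energy:
  assumes p: "p > 0"
  shows "card {x\<in>E \<times> E.
      (\<Sum>i<m. (coset_label p k m M (fst x) i - coset_label p k m M (snd x) i) * int (\<eta> i)) mod int p = 0}
    = line_energy p (k + m) E (append_vec k m (dual_vec p k m \<eta> M) \<eta>)"
proof -
  let ?\<xi> = "append_vec k m (dual_vec p k m \<eta> M) \<eta>"
  have "[\<Sum>i<m. (coset_label p k m M u i - coset_label p k m M v i) * int (\<eta> i)
      = \<Sum>l<k + m. (int (u l) - int (v l)) * int (?\<xi> l)] (mod int p)" for u v
    using cong_diff[OF coset_label_dot_mod[OF p, of k m M u \<eta>] coset_label_dot_mod[OF p, of k m M v \<eta>]]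
    by (simp add: left_diff_distrib sum_subtractf)
  then have "(\<Sum>i<m. (coset_label p k m M u i - coset_label p k m M v i) * int (\<eta> i)) mod int p = 0
      \<longleftrightarrow> (\<Sum>l<k + m. (int (u l) - int (v l)) * int (?\<xi> l)) mod int p = 0" for u v
    by (simp add: cong_def)
  then show ?thesis unfolding line_energy_def by presburger
qed

lemma sum_line_energy_over_dual_classes:
  fixes S :: "(nat \<Rightarrow> nat \<Rightarrow> nat) set" and K :: real
  assumes p: "p > 0" and E: "finite E" and S: "finite S" and K: "K \<ge> 0"
    and few: "\<And>w. w \<in> Fpn p k \<Longrightarrow> real (card {M\<in>S. dual_vec p k m \<eta> M = w}) \<le> K"
  shows "(\<Sum>M\<in>S. real (line_energy p (k + m) E (append_vec k m (dual_vec p k m \<eta> M) \<eta>)))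
    \<le> real (card S) * real (card E)^2 / real p
      + K * (\<Sum>w\<in>Fpn p k. real (line_energy p (k + m) E (append_vec k m w \<eta>)) - real (card E)^2 / real p)"
proof -
  let ?Q = "\<lambda>w. real (line_energy p (k + m) E (append_vec k m w \<eta>))"
  let ?g = "\<lambda>w. ?Q w - real (card E)^2 / real p"
  let ?c = "\<lambda>w. real (card {M\<in>S. dual_vec p k m \<eta> M = w})"
  have g: "?g w \<ge> 0" for w
    using card_sq_le_line_energy[OF p E, of "k + m" "append_vec k m w \<eta>"] p
    by (simp add: field_simps)
  have im: "dual_vec p k m \<eta> ` S \<subseteq> Fpn p k" using dual_vec_in_Fpn[OF p] by auto
  have "(\<Sum>M\<in>S. ?Q (dual_vec p k m \<eta> M))
      = (\<Sum>w\<in>Fpn p k. \<Sum>M\<in>{M\<in>S. dual_vec p k m \<eta> M = w}. ?Q (dual_vec p k m \<eta> M))"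
    by (rule sum.group[OF S finite_Fpn im, symmetric])
  also have "\<dots> = (\<Sum>w\<in>Fpn p k. ?c w * ?Q w)"
  proof (rule sum.cong[OF refl])
    fix w
    have "(\<Sum>M\<in>{M\<in>S. dual_vec p k m \<eta> M = w}. ?Q (dual_vec p k m \<eta> M))
        = (\<Sum>M\<in>{M\<in>S. dual_vec p k m \<eta> M = w}. ?Q w)"
      by (rule sum.cong) auto
    then show "(\<Sum>M\<in>{M\<in>S. dual_vec p k m \<eta> M = w}. ?Q (dual_vec p k m \<eta> M)) = ?c w * ?Q w"
      by simp
  qed
  also have "\<dots> = (\<Sum>w\<in>Fpn p k. ?c w * ?g w + ?c w * (real (card E)^2 / real p))"
    by (rule sum.cong) (simp_all add: algebra_simps)
  also have "\<dots> = (\<Sum>w\<in>Fpn p k. ?c w * ?g w) + (\<Sum>w\<in>Fpn p k. ?c w) * (real (card E)^2 / real p)"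
    by (simp only: sum.distrib sum_distrib_right)
  finally have sum_eq: "(\<Sum>M\<in>S. ?Q (dual_vec p k m \<eta> M))
      = (\<Sum>w\<in>Fpn p k. ?c w * ?g w) + (\<Sum>w\<in>Fpn p k. ?c w) * (real (card E)^2 / real p)" .
  have "(\<Sum>w\<in>Fpn p k. \<Sum>M\<in>{M\<in>S. dual_vec p k m \<eta> M = w}. (1::nat)) = (\<Sum>M\<in>S. 1)"
    by (rule sum.group[OF S finite_Fpn im])
  then have classes: "(\<Sum>w\<in>Fpn p k. ?c w) = real (card S)" by (simp flip: of_nat_sum)
  have "(\<Sum>w\<in>Fpn p k. ?c w * ?g w) \<le> (\<Sum>w\<in>Fpn p k. K * ?g w)"
    by (intro sum_mono mult_right_mono few g)
  also have "\<dots> = K * (\<Sum>w\<in>Fpn p k. ?g w)" by (rule sum_distrib_left[symmetric])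
  finally show ?thesis using sum_eq classes by simp
qed
lemma sum_nonzero_line_energy_excess_le:
  assumes p: "prime p" and m: "m \<ge> 1" and E: "E \<subseteq> Fpn p (k + m)"
  shows "(\<Sum>\<eta>\<in>Fpn p m - {\<lambda>_. 0}. \<Sum>w\<in>Fpn p k.
            real (line_energy p (k + m) E (append_vec k m w \<eta>)) - real (card E)^2 / real p)
    \<le> real (card E) * (real p ^ (k + m) - real p ^ (k + m - 1))"
proof -
  have p0: "p > 0" using prime_gt_0_nat[OF p] .
  let ?g = "\<lambda>\<xi>. real (line_energy p (k + m) E \<xi>) - real (card E)^2 / real p"
  let ?A = "(Fpn p m - {\<lambda>_. 0}) \<times> Fpn p k"
  let ?join = "\<lambda>y. append_vec k m (snd y) (fst y)"
  have g: "?g \<xi> \<ge> 0" for \<xi>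
    using card_sq_le_line_energy[OF p0 finite_subset_Fpn[OF E], of "k + m" \<xi>] p0
    by (simp add: field_simps)
  have "inj_on ?join ?A"
    using append_vec_inj by (fastforce intro!: inj_onI simp: prod_eq_iff)
  then have "(\<Sum>\<eta>\<in>Fpn p m - {\<lambda>_. 0}. \<Sum>w\<in>Fpn p k. ?g (append_vec k m w \<eta>)) = (\<Sum>\<xi>\<in>?join ` ?A. ?g \<xi>)"
    by (simp add: sum.cartesian_product sum.reindex case_prod_beta)
  also have "\<dots> \<le> (\<Sum>\<xi>\<in>Fpn p (k + m). ?g \<xi>)"
    by (rule sum_mono2[OF finite_Fpn]) (use append_vec_in_Fpn g in auto)
  also have "\<dots> = real (\<Sum>\<xi>\<in>Fpn p (k + m). line_energy p (k + m) E \<xi>) - real p ^ (k + m) * (real (card E)^2 / real p)"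
    by (simp add: sum_subtractf)
  also have "\<dots> = real (card E) * (real p ^ (k + m) - real p ^ (k + m - 1))"
  proof -
    have "real p ^ (k + m) = real p * real p ^ (k + m - 1)"
      using m by (simp add: power_eq_if)
    then show ?thesis using p0
      unfolding sum_line_energy[OF p E] by (simp add: field_simps power2_eq_square)
  qed
  finally show ?thesis .
qed

lemma dual_energy_arith:
  fixes P X A B :: real
  assumes P: "P > 1" and m: "m \<ge> 1"
    and H: "P^m * X + P^(m - 1) * (A - X) \<le> A + (P^m - 1) * (A / P) + B * (P^(k + m) - P^(k + m - 1))"
  shows "X \<le> A / P^m + B * P^k"
proof -
  define Q where "Q = P^(m - 1)"
  have PQ: "P^m = P * Q" using m by (simp add: Q_def power_eq_if)
  have "P^(k + m) = P^k * (P * Q)" using PQ by (simp add: power_add)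
  moreover have "P^(k + m - 1) = P^k * Q" using m by (simp add: Q_def flip: power_add)
  ultimately have PnQ: "P^(k + m) - P^(k + m - 1) = P^k * (P * Q - Q)" by (simp add: algebra_simps)
  have Q: "Q > 0" using P by (simp add: Q_def)
  have "(P * Q - 1) * (A / P) = Q * A - A / P" using P by (simp add: field_simps)
  then have "Q * (P - 1) * X \<le> A - A / P + B * P^k * (Q * (P - 1))"
    using H unfolding PQ PnQ Q_def[symmetric] by (simp add: algebra_simps)
  also have "A - A / P = Q * (P - 1) * (A / (P * Q))" using P Q by (simp add: field_simps)
  finally have "Q * (P - 1) * X \<le> Q * (P - 1) * (A / (P * Q) + B * P^k)" by (simp add: algebra_simps)
  moreover have "Q * (P - 1) > 0" using P Q by simp
  ultimately show ?thesis unfolding PQ by (simp add: mult_le_cancel_left_pos)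
qed

lemma sum_graph_energy_le_dual:
  fixes S :: "(nat \<Rightarrow> nat \<Rightarrow> nat) set" and K :: real
  assumes p: "prime p" and m: "m \<ge> 1" and E: "E \<subseteq> Fpn p (k + m)" and S: "finite S" and K: "K \<ge> 0"
    and few: "\<And>\<eta> w. \<eta> \<in> Fpn p m \<Longrightarrow> \<eta> \<noteq> (\<lambda>_. 0) \<Longrightarrow> w \<in> Fpn p k \<Longrightarrow>
        real (card {M\<in>S. dual_vec p k m \<eta> M = w}) \<le> K"
  shows "(\<Sum>M\<in>S. real (graph_energy p k m M E))
    \<le> real (card S) * real (card E)^2 / real p ^ m + K * real (card E) * real p ^ k"
proof -
  have p0: "p > 0" using prime_gt_0_nat[OF p] .
  have finE: "finite E" using finite_subset_Fpn[OF E] .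
  define P where "P = real p"
  define e where "e = real (card E)"
  define s where "s = real (card S)"
  define X where "X = (\<Sum>M\<in>S. real (graph_energy p k m M E))"
  define QM where "QM M \<eta> = real (card {x\<in>E \<times> E.
      (\<Sum>i<m. (coset_label p k m M (fst x) i - coset_label p k m M (snd x) i) * int (\<eta> i)) mod int p = 0})"
    for M \<eta>
  have zero: "(\<lambda>_. 0) \<in> Fpn p m" by (rule zero_in_Fpn[OF p0])
  \<comment> \<open>Count the triples (u, v, \<eta>) with \<eta> orthogonal to the label difference of u and v:
    \<eta> = 0 contributes |E|^2 per matrix, and every other \<eta> a line energy of E.\<close>
  have "P^m * X + P^(m - 1) * (s * e^2 - X)
      = (\<Sum>M\<in>S. P^m * real (graph_energy p k m M E) + P^(m - 1) * (e^2 - real (graph_energy p k m M E)))"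
    by (simp add: X_def s_def sum.distrib sum_subtractf sum_distrib_left algebra_simps)
  also have "\<dots> = (\<Sum>M\<in>S. \<Sum>\<eta>\<in>Fpn p m. QM M \<eta>)"
    using sum_card_kernel_label_diff[OF p E] by (simp add: QM_def P_def e_def of_nat_sum)
  also have "\<dots> = (\<Sum>M\<in>S. QM M (\<lambda>_. 0)) + (\<Sum>\<eta>\<in>Fpn p m - {\<lambda>_. 0}. \<Sum>M\<in>S. QM M \<eta>)"
    by (subst sum.swap) (rule sum.remove[OF finite_Fpn zero])
  also have "(\<Sum>M\<in>S. QM M (\<lambda>_. 0)) = s * e^2"
    by (simp add: QM_def s_def e_def card_cartesian_product power2_eq_square)
  also have "(\<Sum>\<eta>\<in>Fpn p m - {\<lambda>_. 0}. \<Sum>M\<in>S. QM M \<eta>)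
      \<le> (\<Sum>\<eta>\<in>Fpn p m - {\<lambda>_. 0}. s * e^2 / P + K * (\<Sum>w\<in>Fpn p k.
            real (line_energy p (k + m) E (append_vec k m w \<eta>)) - e^2 / P))"
    unfolding QM_def card_kernel_label_diff_eq_line_energy[OF p0] s_def e_def P_def
    by (intro sum_mono sum_line_energy_over_dual_classes[OF p0 finE S K] few) auto
  also have "\<dots> \<le> (P^m - 1) * (s * e^2 / P) + K * (e * (P^(k + m) - P^(k + m - 1)))"
  proof -
    have "real (card (Fpn p m - {\<lambda>_. 0})) = P^m - 1"
      using zero p0 by (simp add: card_Diff_singleton P_def of_nat_diff)
    then show ?thesis
      using mult_left_mono[OF sum_nonzero_line_energy_excess_le[OF p m E] K]
      by (simp add: sum.distrib sum_distrib_left[symmetric] e_def P_def)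
  qed
  finally have "P^m * X + P^(m - 1) * (s * e^2 - X)
      \<le> s * e^2 + (P^m - 1) * (s * e^2 / P) + K * e * (P^(k + m) - P^(k + m - 1))"
    by (simp add: mult.assoc)
  then have "X \<le> s * e^2 / P^m + K * e * P^k"
    using prime_gt_1_nat[OF p] m by (intro dual_energy_arith) (simp_all add: P_def)
  then show ?thesis by (simp add: X_def s_def e_def P_def)
qed

lemma dual_vec_eq_iff:
  assumes p: "p > 0" and w: "w \<in> Fpn p k"
  shows "dual_vec p k m \<eta> M = w \<longleftrightarrow>
    (\<forall>j<k. (\<Sum>i<m. int (\<eta> i) * int (M i j)) mod int p = (- int (w j)) mod int p)"
proof -
  have "dual_vec p k m \<eta> M j = w j \<longleftrightarrow>
      (\<Sum>i<m. int (\<eta> i) * int (M i j)) mod int p = (- int (w j)) mod int p" if j: "j < k" for j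
  proof -
    let ?X = "\<Sum>i<m. int (\<eta> i) * int (M i j)"
    have "dual_vec p k m \<eta> M j = w j \<longleftrightarrow> (- ?X) mod int p = int (w j) mod int p"
      using j p Fpn_less[OF w j] by (auto simp: dual_vec_def nat_eq_iff)
    also have "\<dots> \<longleftrightarrow> int p dvd - ?X - int (w j)"
      by (simp only: mod_eq_dvd_iff)
    also have "- ?X - int (w j) = - (?X - - int (w j))" by simp
    also have "int p dvd \<dots> \<longleftrightarrow> ?X mod int p = (- int (w j)) mod int p"
      by (simp only: dvd_minus_iff mod_eq_dvd_iff)
    finally show ?thesis .
  qed
  note inside = this
  have outside: "dual_vec p k m \<eta> M j = w j" if "\<not> j < k" for j
    using that Fpn_zero_beyond[OF w] by (simp add: dual_vec_def)
  show ?thesis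
  proof
    assume "dual_vec p k m \<eta> M = w"
    then show "\<forall>j<k. (\<Sum>i<m. int (\<eta> i) * int (M i j)) mod int p = (- int (w j)) mod int p"
      using inside by simp
  next
    assume "\<forall>j<k. (\<Sum>i<m. int (\<eta> i) * int (M i j)) mod int p = (- int (w j)) mod int p"
    then have "dual_vec p k m \<eta> M j = w j" for j
      using inside outside by (cases "j < k") simp_all
    then show "dual_vec p k m \<eta> M = w" by blast
  qed
qed

definition matrix_of_cols :: "(nat \<Rightarrow> nat \<Rightarrow> nat) \<Rightarrow> (nat \<Rightarrow> nat \<Rightarrow> nat)" where
  "matrix_of_cols cols = (\<lambda>i j. cols j i)"

lemma matrix_of_cols_neq:
  assumes R: "R \<subseteq> Fpn p m" and c: "c \<in> PiE {..<k} (\<lambda>_. R)" "c' \<in> PiE {..<k} (\<lambda>_. R)" "c \<noteq> c'"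
  shows "\<exists>i<m. \<exists>j<k. matrix_of_cols c i j \<noteq> matrix_of_cols c' i j"
proof -
  obtain j where j: "j < k" "c j \<noteq> c' j" using c by (metis PiE_ext lessThan_iff)
  then obtain i where i: "c j i \<noteq> c' j i" by blast
  have "c j \<in> Fpn p m" "c' j \<in> Fpn p m" using c(1,2) j(1) R by auto
  then have "i < m" using i by (metis (mono_tags, lifting) Fpn_def mem_Collect_eq not_le)
  then show ?thesis using i j by (auto simp: matrix_of_cols_def)
qed

text \<open>For \<eta> \<noteq> 0 the k conditions -\<eta>^T M_j = w_j are affine hyperplanes in the columns M_j.\<close>
lemma card_cols_dual_vec_eq_le:
  assumes p: "prime p" and R: "R \<subseteq> Fpn p m" and sparse: "hyperplane_sparse p m b R"
    and \<eta>: "\<eta> \<in> Fpn p m" "\<eta> \<noteq> (\<lambda>_. 0)" and w: "w \<in> Fpn p k"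
  shows "real (card {M\<in>matrix_of_cols ` PiE {..<k} (\<lambda>_. R). dual_vec p k m \<eta> M = w})
    \<le> (real b * real (card R) / real p) ^ k"
proof -
  let ?P = "PiE {..<k} (\<lambda>_. R)"
  obtain i0 where i0: "\<eta> i0 \<noteq> 0" using \<eta>(2) by blast
  then have i0m: "i0 < m" using Fpn_zero_beyond[OF \<eta>(1)] by (meson not_less)
  then have "\<eta> i0 < p" using Fpn_less[OF \<eta>(1)] by blast
  then have nz: "\<not> int p dvd int (\<eta> i0)" using i0 by (auto dest: dvd_imp_le)
  define B where "B j = {c\<in>R. (\<Sum>l<m. int (\<eta> l) * int (c l)) mod int p = (- int (w j)) mod int p}" for j
  have "card {M\<in>matrix_of_cols ` ?P. dual_vec p k m \<eta> M = w}
      = card (matrix_of_cols ` {c\<in>?P. dual_vec p k m \<eta> (matrix_of_cols c) = w})"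
    by (rule arg_cong[where f = card]) auto
  also have "\<dots> \<le> card {c\<in>?P. dual_vec p k m \<eta> (matrix_of_cols c) = w}"
    using finite_subset_Fpn[OF R] by (intro card_image_le) (simp add: finite_PiE)
  also have "{c\<in>?P. dual_vec p k m \<eta> (matrix_of_cols c) = w} = PiE {..<k} B"
    using prime_gt_0_nat[OF p]
    by (auto simp: dual_vec_eq_iff[OF _ w] matrix_of_cols_def B_def PiE_def Pi_def)
  finally have "card {M\<in>matrix_of_cols ` ?P. dual_vec p k m \<eta> M = w} \<le> card (PiE {..<k} B)" .
  moreover have "real (card (PiE {..<k} B)) \<le> (real b * real (card R) / real p) ^ k"
    unfolding B_def
    by (rule card_PiE_le_power, rule card_hyperplane_le[where z = "\<lambda>l. int (\<eta> l)", OF p sparse i0m nz])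
  ultimately show ?thesis by linarith
qed

lemma low_energy_family_cols:
  assumes p: "prime p" and R: "R \<subseteq> Fpn p m" and b: "b \<ge> 1" and m: "m \<ge> 1"
    and sparse: "hyperplane_sparse p m b R"
  shows "low_energy_family p k m (real b ^ k) (matrix_of_cols ` PiE {..<k} (\<lambda>_. R))"
    and "card (matrix_of_cols ` PiE {..<k} (\<lambda>_. R)) = card R ^ k"
proof -
  have p0: "p > 0" using prime_gt_0_nat[OF p] .
  let ?P = "PiE {..<k} (\<lambda>_. R)"
  let ?S = "matrix_of_cols ` ?P"
  have finS: "finite ?S" using finite_subset_Fpn[OF R] by (simp add: finite_PiE)
  have "inj_on matrix_of_cols ?P"
  proof (rule inj_onI, rule ccontr)
    fix c c' assume "c \<in> ?P" "c' \<in> ?P" "matrix_of_cols c = matrix_of_cols c'" "c \<noteq> c'"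
    then show False using matrix_of_cols_neq[OF R] by metis
  qed
  then show card_S: "card ?S = card R ^ k" by (simp add: card_image card_PiE)
  have entries: "\<forall>M\<in>?S. \<forall>i<m. \<forall>j<k. M i j < p"
    using R by (auto simp: Fpn_def matrix_of_cols_def)
  have distinct: "\<forall>M\<in>?S. \<forall>M'\<in>?S. M \<noteq> M' \<longrightarrow> (\<exists>i<m. \<exists>j<k. M i j \<noteq> M' i j)"
    using matrix_of_cols_neq[OF R] by blast
  define K where "K = (real b * real (card R) / real p) ^ k"
  have few: "real (card {M\<in>?S. dual_vec p k m \<eta> M = w}) \<le> K"
    if "\<eta> \<in> Fpn p m" "\<eta> \<noteq> (\<lambda>_. 0)" "w \<in> Fpn p k" for \<eta> w
    unfolding K_def by (rule card_cols_dual_vec_eq_le[OF p R sparse that])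
  have energy: "(\<Sum>M\<in>?S. real (graph_energy p k m M E))
      \<le> real b ^ k * real (card ?S) * (real (card E) + real (card E)^2 / real p ^ m)"
    if E: "E \<subseteq> Fpn p (k + m)" for E
  proof -
    have A: "(\<Sum>M\<in>?S. real (graph_energy p k m M E))
        \<le> real (card ?S) * real (card E)^2 / real p ^ m + K * real (card E) * real p ^ k"
      by (rule sum_graph_energy_le_dual[OF p m E finS _ few]) (simp_all add: K_def)
    have "K * real p ^ k = real b ^ k * real (card ?S)"
      using p0 by (simp add: K_def card_S power_divide power_mult_distrib)
    then have B: "K * real (card E) * real p ^ k = real b ^ k * real (card ?S) * real (card E)"
      by (metis mult.assoc mult.commute)
    have "1 \<le> real b ^ k" using b by simp
    then have C: "real (card ?S) * real (card E)^2 / real p ^ m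
        \<le> real b ^ k * (real (card ?S) * real (card E)^2 / real p ^ m)"
      using mult_right_mono[of 1 "real b ^ k" "real (card ?S) * real (card E)^2 / real p ^ m"] by simp
    have "real b ^ k * real (card ?S) * (real (card E) + real (card E)^2 / real p ^ m)
       = real b ^ k * real (card ?S) * real (card E) + real b ^ k * (real (card ?S) * real (card E)^2 / real p ^ m)"
      by (simp add: algebra_simps)
    with A B C show ?thesis by linarith
  qed
  show "low_energy_family p k m (real b ^ k) ?S"
    unfolding low_energy_family_def using finS entries distinct energy by blast
qed

text \<open>Rows are drawn from a hyperplane-sparse set when there are fewer rows than columns, columns
  otherwise, so that \<alpha> = min m k \<cdot> \<beta> with 1 < \<beta> \<le> max m k.\<close>
lemma exists_low_energy_family:
  fixes \<alpha> :: real
  assumes p: "prime p" and k: "k \<ge> 1" and m: "m \<ge> 1"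
    and \<alpha>: "real (min m k) < \<alpha>" "\<alpha> \<le> real (m * k)"
  obtains S where "low_energy_family p k m (real (max m k) ^ min m k) S"
    "real p powr \<alpha> \<le> real (card S)" "real (card S) \<le> 2 ^ min m k * real p powr \<alpha>"
proof -
  define a where "a = min m k"
  define b where "b = max m k"
  define \<beta> where "\<beta> = \<alpha> / real a"
  have a: "real a > 0" using k m by (simp add: a_def)
  have "a * b = m * k" by (simp add: a_def b_def min_def max_def)
  then have \<beta>: "1 < \<beta>" "\<beta> \<le> real b"
    using \<alpha> a by (simp_all add: \<beta>_def a_def field_simps flip: of_nat_mult)
  obtain R where R: "R \<subseteq> Fpn p b" "hyperplane_sparse p b b R"
    and card_R: "real p powr \<beta> \<le> real (card R)" "real (card R) \<le> 2 * real p powr \<beta>"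
    using exists_hyperplane_sparse_set[OF \<beta> p] by blast
  have "b \<ge> 1" using k m by (simp add: b_def)
  then obtain S where S: "low_energy_family p k m (real b ^ a) S" "card S = card R ^ a"
  proof (cases "m \<le> k")
    case True
    then have "a = m" "b = k" by (simp_all add: a_def b_def)
    then show thesis using that low_energy_family_rows[OF p] R \<open>b \<ge> 1\<close> by blast
  next
    case False
    then have "a = k" "b = m" by (simp_all add: a_def b_def)
    then show thesis using that low_energy_family_cols[OF p] R \<open>b \<ge> 1\<close> m by blast
  qed
  have "(real p powr \<beta>) ^ a = real p powr \<alpha>"
    using prime_gt_0_nat[OF p] a by (simp add: \<beta>_def powr_realpow[symmetric] powr_powr)
  then have "real p powr \<alpha> \<le> real (card S)" "real (card S) \<le> 2 ^ a * real p powr \<alpha>"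
    using power_mono[OF card_R(1), of a] power_mono[OF card_R(2), of a]
    by (simp_all add: S(2) power_mult_distrib)
  then show thesis using that S(1) by (simp add: a_def b_def)
qed

theorem theorem1p3:
  fixes n m :: nat and \<alpha> :: real
  assumes "n \<ge> 2" and "1 \<le> m" and "m \<le> n - 1"
    and "real (min m (n - m)) < \<alpha>" and "\<alpha> \<le> real (m * (n - m))"
  shows "\<exists>C1 C2 C3 :: real. C1 > 0 \<and> C2 > 0 \<and> C3 > 0 \<and>
    (\<forall>p :: nat. prime p \<longrightarrow>
      (\<exists>G. G \<subseteq> Grass p n (n - m) \<and>
           C1 * real p powr \<alpha> \<le> real (card G) \<and> real (card G) \<le> C2 * real p powr \<alpha> \<and>
           (\<forall>E N. E \<subseteq> Fpn p n \<longrightarrow> E \<noteq> {} \<longrightarrow> N > (0::real) \<longrightarrow>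
              real (card {W \<in> G. real (card (proj p n W E)) \<le> N})
                \<le> C3 * real (card G) * N * (1 / real (card E) + real p powr (- real m)))))"
proof -
  define k where "k = n - m"
  have n: "n = k + m" and k: "k \<ge> 1" using assms(1-3) by (simp_all add: k_def)
  define C where "C = real (max m k) ^ min m k"
  have \<alpha>: "real (min m k) < \<alpha>" "\<alpha> \<le> real (m * k)"
    using assms(4,5) unfolding k_def by blast+
  have "\<exists>G. G \<subseteq> Grass p n (n - m) \<and>
           1 * real p powr \<alpha> \<le> real (card G) \<and> real (card G) \<le> 2 ^ min m k * real p powr \<alpha> \<and>
           (\<forall>E N. E \<subseteq> Fpn p n \<longrightarrow> E \<noteq> {} \<longrightarrow> N > (0::real) \<longrightarrow>
              real (card {W \<in> G. real (card (proj p n W E)) \<le> N})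
                \<le> C * real (card G) * N * (1 / real (card E) + real p powr (- real m)))"
    if p: "prime p" for p
  proof -
    obtain S where S: "low_energy_family p k m C S"
      "real p powr \<alpha> \<le> real (card S)" "real (card S) \<le> 2 ^ min m k * real p powr \<alpha>"
      using exists_low_energy_family[OF p k assms(2) \<alpha>] unfolding C_def by blast
    show ?thesis
      using low_energy_family_projection_bound[OF p S(1)] S(2,3)
      by (intro exI[of _ "graph_space p k m ` S"]) (simp add: n)
  qed
  moreover have "C > 0" using k by (simp add: C_def max_def)
  ultimately show ?thesis by (intro exI[of _ 1] exI[of _ "2 ^ min m k"] exI[of _ C]) simp
qed

end
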